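(* In the $N$-body setting of the context, let $\mathcal S$ be any set of particle pairs, enumerated in any order, and define $$\psi^{\mathrm{[KDBK]^2}}_h=e^{\frac h6\hat V_c}\,\phi^{\dagger s}_{h/2}\,e^{\frac{2h}3\hat V_c}\,\phi^s_{h/2}\,e^{\frac h6\hat V_c}.$$ Then $$H^{\mathrm{[KDBK]^2}}_{\mathrm{err}}=\frac{h^2}{48}\{\{T,V_s\},V_s\}_3+\frac{h^2}{72}\{\{T,V_c\},V_c\}+\mathcal O(h^4);$$ in particular no term $\{\{T,V_s\},V_c\}$ appears at order $h^2$.
   Context: Particles $i=1,\dots,N$ with masses $m_i>0$, positions $\vec x_i$, momenta $\vec p_i$ in $\mathbb R^3$; $G_N>0$. $T_i=\vec p_i^{\,2}/(2m_i)$, $T=\sum_iT_i$, $V_{ij}=-G_Nm_im_j/|\vec x_i-\vec x_j|$, $V=\sum_{i<j}V_{ij}$, $H=T+V$. $\mathcal S$ is a set of unordered pairs $\{i,j\}$; $V_s=\sum_{\{i,j\}\in\mathcal S}V_{ij}$, $V_c=V-V_s$. Poisson bracket $\{A,B\}=\sum_i(\partial_{\vec x_i}A\cdot\partial_{\vec p_i}B-\partial_{\vec p_i}A\cdot\partial_{\vec x_i}B)$; Lie operator $\hat Ff=\{f,F\}$, $e^{t\hat F}=\sum_kt^k\hat F^k/k!$; $[\hat A,\hat B]=\widehat{\{B,A\}}$. The surrogate Hamiltonian $\tilde H$ of a product $\Psi_h$ of such exponentials is the formal power series in $h$ with $\Psi_h=\exp(h\widehat{\tilde H})$ from the Baker–Campbell–Hausdorff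 formula; $H_{\mathrm{err}}=\tilde H-H$; $\mathcal O(h^k)$ means terms of order $\ge k$. Enumerate $\mathcal S$ as $(i_n,j_n)$, $n=1,\dots,K_s$; $H_n=T_{i_n}+T_{j_n}+V_{i_nj_n}$; $B_n(h)=e^{h\hat H_n}e^{-h(\hat T_{i_n}+\hat T_{j_n})}$, $B_n^\dagger(h)=e^{-h(\hat T_{i_n}+\hat T_{j_n})}e^{h\hat H_n}$; $\psi^{W_s}_h=B_{K_s}(h)\cdots B_1(h)$, $\psi^{\dagger W_s}_h=B_1^\dagger(h)\cdots B_{K_s}^\dagger(h)$; $\phi^s_h=\psi^{W_s}_he^{h\hat T}$, $\phi^{\dagger s}_h=e^{h\hat T}\psi^{\dagger W_s}_h$. $\{\{T,V_s\},V_s\}_3=\{\{T,V_s\},V_s\}-\sum_{\{i,j\}\in\mathcal S}\{\{T,V_{ij}\},V_{ij}\}$. *)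

theory Defs
  imports "HOL-Analysis.Analysis"
begin

text \<open>Particles are indexed by a finite type 'n (N = CARD('n)).
  A phase-space point is a pair (positions, momenta).\<close>

type_synonym 'n phase = "('n \<Rightarrow> real^3) \<times> ('n \<Rightarrow> real^3)"

definition dxi :: "('n phase \<Rightarrow> real) \<Rightarrow> 'n \<Rightarrow> 3 \<Rightarrow> 'n phase \<Rightarrow> real" where
  "dxi F i k z = deriv (\<lambda>t. F ((fst z)(i := fst z i + t *\<^sub>R axis k 1), snd z)) 0"

definition dpi :: "('n phase \<Rightarrow> real) \<Rightarrow> 'n \<Rightarrow> 3 \<Rightarrow> 'n phase \<Rightarrow> real" where
  "dpi F i k z = deriv (\<lambda>t. F (fst z, (snd z)(i := snd z i + t *\<^sub>R axis k 1))) 0"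

definition poisson :: "('n::finite phase \<Rightarrow> real) \<Rightarrow> ('n phase \<Rightarrow> real) \<Rightarrow> 'n phase \<Rightarrow> real" where
  "poisson A B z = (\<Sum>i\<in>UNIV. \<Sum>k\<in>UNIV. dxi A i k z * dpi B i k z - dpi A i k z * dxi B i k z)"

text \<open>Lie bracket of functions corresponding to the commutator of Lie operators:
  [A^,B^] = ({B,A})^.\<close>
definition lb :: "('n::finite phase \<Rightarrow> real) \<Rightarrow> ('n phase \<Rightarrow> real) \<Rightarrow> 'n phase \<Rightarrow> real" where
  "lb A B = poisson B A"

definition Tk :: "('n \<Rightarrow> real) \<Rightarrow> 'n \<Rightarrow> 'n phase \<Rightarrow> real" where
  "Tk m i z = (norm (snd z i))\<^sup>2 / (2 * m i)"

definition Tkin :: "('n::finite \<Rightarrow> real) \<Rightarrow> 'n phase \<Rightarrow> real" where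
  "Tkin m z = (\<Sum>i\<in>UNIV. Tk m i z)"

definition Vp :: "real \<Rightarrow> ('n \<Rightarrow> real) \<Rightarrow> 'n \<Rightarrow> 'n \<Rightarrow> 'n phase \<Rightarrow> real" where
  "Vp G m i j z = - G * m i * m j / dist (fst z i) (fst z j)"

text \<open>V = sum over i<j of V_ij, written as half the sum over ordered pairs i ~= j.\<close>
definition Vpot :: "real \<Rightarrow> ('n::finite \<Rightarrow> real) \<Rightarrow> 'n phase \<Rightarrow> real" where
  "Vpot G m z = (\<Sum>i\<in>UNIV. \<Sum>j\<in>UNIV. if i \<noteq> j then Vp G m i j z else 0) / 2"

definition Ham :: "real \<Rightarrow> ('n::finite \<Rightarrow> real) \<Rightarrow> 'n phase \<Rightarrow> real" where
  "Ham G m z = Tkin m z + Vpot G m z"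

text \<open>V_s for an enumeration ps of the set S of pairs; V_c = V - V_s.\<close>
definition Vs :: "real \<Rightarrow> ('n \<Rightarrow> real) \<Rightarrow> ('n \<times> 'n) list \<Rightarrow> 'n phase \<Rightarrow> real" where
  "Vs G m ps z = sum_list (map (\<lambda>(i,j). Vp G m i j z) ps)"

definition Vc :: "real \<Rightarrow> ('n::finite \<Rightarrow> real) \<Rightarrow> ('n \<times> 'n) list \<Rightarrow> 'n phase \<Rightarrow> real" where
  "Vc G m ps z = Vpot G m z - Vs G m ps z"

definition Hpair :: "real \<Rightarrow> ('n \<Rightarrow> real) \<Rightarrow> 'n \<Rightarrow> 'n \<Rightarrow> 'n phase \<Rightarrow> real" where
  "Hpair G m i j z = Tk m i z + Tk m j z + Vp G m i j z"

definition TVsVs3 :: "real \<Rightarrow> ('n::finite \<Rightarrow> real) \<Rightarrow> ('n \<times> 'n) list \<Rightarrow> 'n phase \<Rightarrow> real" where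
  "TVsVs3 G m ps z = poisson (poisson (Tkin m) (Vs G m ps)) (Vs G m ps) z
     - sum_list (map (\<lambda>(i,j). poisson (poisson (Tkin m) (Vp G m i j)) (Vp G m i j) z) ps)"

text \<open>A product e^{h c_0 A_0^} ... e^{h c_{M-1} A_{M-1}^} (leftmost factor first) is
  represented by the list of pairs (c_a, A_a).
  The coefficient of a word w (letters a < M) in the noncommutative series
  log(e^{X_0} ... e^{X_{M-1}}) is logcoef w; by Dynkin--Specht--Wever its degree-n part
  equals sum_w logcoef w / n [X_{w1},[X_{w2},...,X_{wn}]].\<close>

definition ncoef :: "nat list \<Rightarrow> real" where
  "ncoef b = (if sorted b then 1 / (\<Prod>a\<in>set b. fact (count_list b a)) else 0)"

definition logcoef :: "nat list \<Rightarrow> real" where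
  "logcoef w = (\<Sum>bs\<in>{bs. concat bs = w \<and> [] \<notin> set bs}.
      (-1) ^ (length bs - 1) / real (length bs) * prod_list (map ncoef bs))"

fun nestf :: "(real \<times> ('n::finite phase \<Rightarrow> real)) list \<Rightarrow> nat list \<Rightarrow> 'n phase \<Rightarrow> real" where
  "nestf fs [] = (\<lambda>z. 0)"
| "nestf fs [a] = snd (fs ! a)"
| "nestf fs (a # w) = lb (snd (fs ! a)) (nestf fs w)"

text \<open>Coefficient of h^k in the surrogate Hamiltonian tilde H, where
  Psi_h = exp(h tildeH^) and h tildeH = sum_n h^n (degree-n BCH term).\<close>
definition surr :: "(real \<times> ('n::finite phase \<Rightarrow> real)) list \<Rightarrow> nat \<Rightarrow> 'n phase \<Rightarrow> real" where
  "surr fs k z = (let n = Suc k in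
     \<Sum>w\<in>{w. length w = n \<and> set w \<subseteq> {..<length fs}}.
        logcoef w * prod_list (map (\<lambda>a. fst (fs ! a)) w) / real n * nestf fs w z)"

text \<open>Factor lists (with step h/2 built into the coefficients):
  phi^s_{h/2} = B_K(h/2) ... B_1(h/2) e^{(h/2)T^},
  phi^{dagger s}_{h/2} = e^{(h/2)T^} B_1^dagger(h/2) ... B_K^dagger(h/2).\<close>

definition phi_s :: "real \<Rightarrow> ('n::finite \<Rightarrow> real) \<Rightarrow> ('n \<times> 'n) list \<Rightarrow> (real \<times> ('n phase \<Rightarrow> real)) list" where
  "phi_s G m ps =
     concat (map (\<lambda>(i,j). [(1/2, Hpair G m i j), (-1/2, \<lambda>z. Tk m i z + Tk m j z)]) (rev ps))
     @ [(1/2, Tkin m)]"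

definition phi_s_dag :: "real \<Rightarrow> ('n::finite \<Rightarrow> real) \<Rightarrow> ('n \<times> 'n) list \<Rightarrow> (real \<times> ('n phase \<Rightarrow> real)) list" where
  "phi_s_dag G m ps =
     [(1/2, Tkin m)] @
     concat (map (\<lambda>(i,j). [(-1/2, \<lambda>z. Tk m i z + Tk m j z), (1/2, Hpair G m i j)]) ps)"

definition KDBK2 :: "real \<Rightarrow> ('n::finite \<Rightarrow> real) \<Rightarrow> ('n \<times> 'n) list \<Rightarrow> (real \<times> ('n phase \<Rightarrow> real)) list" where
  "KDBK2 G m ps = [(1/6, Vc G m ps)] @ phi_s_dag G m ps @ [(2/3, Vc G m ps)]
                  @ phi_s G m ps @ [(1/6, Vc G m ps)]"

end

theory Submission
  imports Defs
begin

text \<open>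
  The surrogate Hamiltonian is read off degree by degree from the Dynkin form of the BCH
  series. In degree one it is the sum of the weighted exponents, which telescopes to
  \<open>T + V\<close>. The factor list of \<open>[KDBK]\<^sup>2\<close> is a palindrome, and relabelling words by the
  reflection of the factor list negates the Dynkin coefficients of words of length 2 and 4,
  so the terms of order \<open>h\<close> and \<open>h\<^sup>3\<close> vanish.

  Every factor has the form \<open>\<Sum>\<^sub>j a\<^sub>j |p\<^sub>j|\<^sup>2 + W(x)\<close>, and a double Poisson bracket of such
  functions at a collision-free point only depends on the coefficients \<open>a\<close> and on the
  gradients and Hessians of the potentials there, through a trilinear form that is
  antisymmetric in its last two arguments and satisfies the Jacobi identity. For such a form
  the cubic BCH term of a concatenation of products is computed from those of the pieces, and
  the term of order \<open>h\<^sup>2\<close> follows by induction over the list of pairs, using only that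
  potentials Poisson-commute and that on \<open>V\<^sub>i\<^sub>j\<close> the pair kinetic energy \<open>T\<^sub>i + T\<^sub>j\<close> acts
  like \<open>T\<close>. The mirror symmetry of the scheme makes the mixed terms \<open>{{T, V\<^sub>s}, V\<^sub>c}\<close> cancel.
\<close>

section \<open>Dynkin coefficients of short words\<close>

fun compositions :: "'a list \<Rightarrow> 'a list list list" where
  "compositions [] = [[]]"
| "compositions [x] = [[[x]]]"
| "compositions (x # y # ys) =
     map (\<lambda>bs. [x] # bs) (compositions (y # ys))
     @ map (\<lambda>bs. (x # hd bs) # tl bs) (compositions (y # ys))"

lemma set_compositions: "set (compositions w) = {bs. concat bs = w \<and> [] \<notin> set bs}"
proof (induction w rule: compositions.induct)
  case 1
  show ?case by auto (metis ex_in_conv set_empty2)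
next
  case (2 x)
  show ?case
  proof auto
    fix bs assume "concat bs = [x]" "[] \<notin> set bs"
    then show "bs = [[x]]"
      by (cases bs) (auto simp: append_eq_Cons_conv, metis ex_in_conv set_empty2)
  qed
next
  case (3 x y ys)
  show ?case
  proof (rule set_eqI, rule iffI)
    fix bs assume "bs \<in> set (compositions (x # y # ys))"
    then obtain bs' where bs': "concat bs' = y # ys" "[] \<notin> set bs'"
      and "bs = [x] # bs' \<or> bs = (x # hd bs') # tl bs'" using 3 by auto
    moreover obtain b0 rest where "bs' = b0 # rest" using bs' by (cases bs') auto
    ultimately show "bs \<in> {bs. concat bs = x # y # ys \<and> [] \<notin> set bs}" by auto
  next
    fix bs assume "bs \<in> {bs. concat bs = x # y # ys \<and> [] \<notin> set bs}"
    then have c: "concat bs = x # y # ys" and n: "[] \<notin> set bs" by auto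
    obtain b rest where "bs = b # rest" using c by (cases bs) auto
    moreover from this obtain b' where "b = x # b'" using c n by (cases b) auto
    ultimately have bs: "bs = (x # b') # rest" by simp
    show "bs \<in> set (compositions (x # y # ys))"
    proof (cases "b' = []")
      case True
      then show ?thesis using 3 c n bs by auto
    next
      case False
      then have "b' # rest \<in> set (compositions (y # ys))" using 3 c n bs by auto
      then show ?thesis using bs False by (auto intro!: image_eqI[where x="b' # rest"])
    qed
  qed
qed

lemma distinct_compositions: "distinct (compositions w)"
proof (induction w rule: compositions.induct)
  case (3 x y ys)
  have ne: "bs \<noteq> [] \<and> hd bs \<noteq> []" if "bs \<in> set (compositions (y # ys))" for bs
    using that unfolding set_compositions by (cases bs) auto
  then have "inj_on (\<lambda>bs. (x # hd bs) # tl bs) (set (compositions (y # ys)))"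
    by (intro inj_onI) (metis list.collapse list.inject)
  with 3 ne show ?case by (auto simp: distinct_map inj_on_def) metis
qed auto

lemma logcoef_eq_sum_compositions:
  "logcoef w = (\<Sum>bs\<leftarrow>compositions w.
      (-1) ^ (length bs - 1) / real (length bs) * prod_list (map ncoef bs))"
  unfolding logcoef_def set_compositions[symmetric]
  by (simp add: sum_list_distinct_conv_sum_set distinct_compositions)

lemma ncoef_singleton: "ncoef [x] = 1"
  by (simp add: ncoef_def)

lemma ncoef_pair: "ncoef [x, y] = (if x < y then 1 else if x = y then 1/2 else 0)"
  by (auto simp: ncoef_def)

lemma ncoef_triple: "ncoef [x, y, z :: nat] =
   (if x \<le> y \<and> y \<le> z then
      (if x = y then (if y = z then 1/6 else 1/2) else (if y = z then 1/2 else 1))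
    else 0)"
  by (auto simp: ncoef_def insert_commute)

lemma ncoef_quadruple: "ncoef [x, y, z, u :: nat] =
   (if x \<le> y \<and> y \<le> z \<and> z \<le> u then
      (if x = y then (if y = z then (if z = u then 1/24 else 1/6) else (if z = u then 1/4 else 1/2))
       else (if y = z then (if z = u then 1/6 else 1/2) else (if z = u then 1/2 else 1)))
    else 0)"
  unfolding ncoef_def
  by (cases "x \<le> y \<and> y \<le> z \<and> z \<le> u"; cases "x = y"; cases "y = z"; cases "z = u";
      cases "x = z"; cases "y = u") (auto simp: insert_commute fact_numeral)

lemma logcoef_singleton: "logcoef [a] = 1"
  by (simp add: logcoef_eq_sum_compositions ncoef_singleton)

lemma logcoef_pair: "logcoef [a, b] = ncoef [a, b] - 1/2"
  by (simp add: logcoef_eq_sum_compositions ncoef_singleton)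

lemma logcoef_triple:
  "logcoef [a, b, c] = ncoef [a, b, c] - (ncoef [b, c] + ncoef [a, b]) / 2 + 1/3"
  by (simp add: logcoef_eq_sum_compositions ncoef_singleton field_simps)

lemma logcoef_quadruple: "logcoef [a, b, c, d] = ncoef [a, b, c, d]
   - (ncoef [b, c, d] + ncoef [a, b] * ncoef [c, d] + ncoef [a, b, c]) / 2
   + (ncoef [c, d] + ncoef [b, c] + ncoef [a, b]) / 3 - 1/4"
  by (simp add: logcoef_eq_sum_compositions ncoef_singleton field_simps)

lemma logcoef_pair_antitone_relabel:
  fixes f :: "nat \<Rightarrow> nat"
  assumes "\<And>x y. x \<in> {a, b} \<Longrightarrow> y \<in> {a, b} \<Longrightarrow> f x < f y \<longleftrightarrow> y < x"
  shows "logcoef (map f [a, b]) = - logcoef [a, b]"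
proof -
  have "f a < f b \<longleftrightarrow> b < a" "f b < f a \<longleftrightarrow> a < b" using assms by auto
  moreover have "f a = f b \<longleftrightarrow> a = b"
    using assms[of a b] assms[of b a] by (cases a b rule: linorder_cases) auto
  ultimately show ?thesis by (auto simp: logcoef_pair ncoef_pair)
qed

lemma logcoef_quadruple_antitone_relabel:
  fixes f :: "nat \<Rightarrow> nat"
  assumes less: "\<And>x y. x \<in> {a, b, c, d} \<Longrightarrow> y \<in> {a, b, c, d} \<Longrightarrow> f x < f y \<longleftrightarrow> y < x"
  shows "logcoef (map f [a, b, c, d]) = - logcoef [a, b, c, d]"
proof -
  have eq: "f x = f y \<longleftrightarrow> x = y" if "x \<in> {a, b, c, d}" "y \<in> {a, b, c, d}" for x y
    using less[OF that] less[OF that(2,1)] by (cases x y rule: linorder_cases) auto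
  have le: "f x \<le> f y \<longleftrightarrow> y \<le> x" if "x \<in> {a, b, c, d}" "y \<in> {a, b, c, d}" for x y
    using less[OF that] less[OF that(2,1)] eq[OF that] by auto
  note order_facts = less[of a b] less[of a c] less[of a d] less[of b c] less[of b d] less[of c d]
    less[of b a] less[of c a] less[of d a] less[of c b] less[of d b] less[of d c]
    eq[of a b] eq[of a c] eq[of a d] eq[of b c] eq[of b d] eq[of c d]
    eq[of b a] eq[of c a] eq[of d a] eq[of c b] eq[of d b] eq[of d c]
    le[of a b] le[of a c] le[of a d] le[of b c] le[of b d] le[of c d]
    le[of b a] le[of c a] le[of d a] le[of c b] le[of d b] le[of d c]
  show ?thesis
    apply (simp only: list.map logcoef_quadruple ncoef_pair ncoef_triple ncoef_quadruple)
    apply (simp only: order_facts insert_iff simp_thms)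
    by (cases a b rule: linorder_cases; cases b c rule: linorder_cases;
        cases c d rule: linorder_cases; simp)
qed

section \<open>Low-degree terms of the surrogate Hamiltonian\<close>

lemma surr_0: "surr fs 0 z = (\<Sum>(c, f)\<leftarrow>fs. c * f z)"
proof -
  have words: "{w. length w = Suc 0 \<and> set w \<subseteq> {..<length fs}} = (\<lambda>a. [a]) ` {..<length fs}"
    by (auto simp: length_Suc_conv)
  have "surr fs 0 z = (\<Sum>a<length fs. fst (fs ! a) * snd (fs ! a) z)"
    unfolding surr_def Let_def words
    by (simp add: sum.reindex inj_on_def logcoef_singleton)
  then show ?thesis
    by (simp add: sum_list_sum_nth atLeast0LessThan case_prod_unfold)
qed

lemma nestf_map_cong:
  assumes "\<And>a. a \<in> set w \<Longrightarrow> fs ! (f a) = fs ! a"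
  shows "nestf fs (map f w) = nestf fs w"
  using assms by (induction fs w rule: nestf.induct) auto

text \<open>Relabelling the letters of a word by the reflection \<open>a \<mapsto> M - 1 - a\<close> leaves the
  factors of a palindromic product unchanged and negates the Dynkin coefficients of words
  of length 2 and 4, so these words cancel in pairs.\<close>

lemma surr_palindrome_even_degree:
  assumes palindrome: "rev fs = fs" and k: "k = 1 \<or> k = 3"
  shows "surr fs k z = 0"
proof -
  define M where "M = length fs"
  define W where "W = {w. length w = Suc k \<and> set w \<subseteq> {..<M}}"
  define refl where "refl a = M - Suc a" for a
  define F where "F w = logcoef w * prod_list (map (\<lambda>a. fst (fs ! a)) w) / real (Suc k)
      * nestf fs w z" for w
  have surr_F: "surr fs k z = (\<Sum>w\<in>W. F w)"
    by (simp add: surr_def Let_def F_def W_def M_def)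
  have fs_refl: "fs ! refl a = fs ! a" if "a < M" for a
    using that palindrome rev_nth[of a fs] by (simp add: M_def refl_def)
  have refl_refl: "map (refl \<circ> refl) w = w" if "w \<in> W" for w
    using that by (auto simp: W_def refl_def intro!: map_idI)
  have reindex: "(\<Sum>w\<in>W. F w) = (\<Sum>w\<in>W. F (map refl w))"
    by (rule sum.reindex_bij_witness[where i="map refl" and j="map refl"])
       (auto simp: refl_refl, auto simp: W_def refl_def)
  have "F (map refl w) = - F w" if "w \<in> W" for w
  proof -
    have w: "length w = Suc k" "set w \<subseteq> {..<M}" using that by (auto simp: W_def)
    have antitone: "refl x < refl y \<longleftrightarrow> y < x" if "x \<in> set w" "y \<in> set w" for x y
      using that w by (auto simp: refl_def)
    have coef: "logcoef (map refl w) = - logcoef w"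
    proof (cases "k = 1")
      case True
      then obtain a b where "w = [a, b]" using w(1) by (auto simp: length_Suc_conv)
      then show ?thesis using antitone logcoef_pair_antitone_relabel[of a b refl] by auto
    next
      case False
      then obtain a b c d where "w = [a, b, c, d]"
        using k w(1) by (auto simp: length_Suc_conv numeral_eq_Suc)
      then show ?thesis using antitone logcoef_quadruple_antitone_relabel[of a b c d refl] by auto
    qed
    have weights: "map (\<lambda>a. fst (fs ! a)) (map refl w) = map (\<lambda>a. fst (fs ! a)) w"
      using w(2) fs_refl by auto
    have "nestf fs (map refl w) = nestf fs w"
      using w(2) fs_refl by (intro nestf_map_cong) auto
    then show ?thesis unfolding F_def coef weights by simp
  qed
  then have "(\<Sum>w\<in>W. F w) = - (\<Sum>w\<in>W. F w)"
    using reindex by (simp add: sum_negf)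
  then show ?thesis using surr_F by linarith
qed

section \<open>The cubic BCH term of an abstract nested bracket\<close>

lemma double_sum_eq_if_symmetrized_eq:
  fixes H K :: "'a \<Rightarrow> 'a \<Rightarrow> real"
  assumes "\<And>a b. a \<in> A \<Longrightarrow> b \<in> A \<Longrightarrow> H a b + H b a = K a b + K b a"
  shows "(\<Sum>a\<in>A. \<Sum>b\<in>A. H a b) = (\<Sum>a\<in>A. \<Sum>b\<in>A. K a b)"
proof -
  have "2 * (\<Sum>a\<in>A. \<Sum>b\<in>A. H a b) = (\<Sum>a\<in>A. \<Sum>b\<in>A. H a b) + (\<Sum>a\<in>A. \<Sum>b\<in>A. H b a)"
    by (subst (2) sum.swap) simp
  also have "\<dots> = (\<Sum>a\<in>A. \<Sum>b\<in>A. H a b + H b a)"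
    by (simp add: sum.distrib)
  also have "\<dots> = (\<Sum>a\<in>A. \<Sum>b\<in>A. K a b + K b a)"
    using assms by (auto intro!: sum.cong)
  also have "\<dots> = (\<Sum>a\<in>A. \<Sum>b\<in>A. K a b) + (\<Sum>a\<in>A. \<Sum>b\<in>A. K b a)"
    by (simp add: sum.distrib)
  also have "\<dots> = 2 * (\<Sum>a\<in>A. \<Sum>b\<in>A. K a b)"
    by (subst (2) sum.swap) simp
  finally show ?thesis by simp
qed

lemma sum_cube_lessThan_Suc:
  fixes f :: "nat \<Rightarrow> nat \<Rightarrow> nat \<Rightarrow> 'a :: comm_monoid_add"
  shows "(\<Sum>a<Suc M. \<Sum>b<Suc M. \<Sum>d<Suc M. f a b d) = (\<Sum>a<M. \<Sum>b<M. \<Sum>d<M. f a b d)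
    + (\<Sum>a<M. \<Sum>b<M. f a b M + f a M b + f M a b)
    + (\<Sum>a<M. f a M M + f M a M + f M M a) + f M M M"
  by (simp add: sum.distrib algebra_simps)

lemma words_length_3:
  "{w. length w = 3 \<and> set w \<subseteq> {..<M}} = (\<lambda>(a, b, c). [a, b, c]) ` ({..<M} \<times> {..<M} \<times> {..<M})"
proof (rule set_eqI, rule iffI)
  fix w assume w: "w \<in> {w. length w = 3 \<and> set w \<subseteq> {..<M}}"
  then obtain a b c where "w = [a, b, c]" by (auto simp: length_Suc_conv numeral_eq_Suc)
  with w show "w \<in> (\<lambda>(a, b, c). [a, b, c]) ` ({..<M} \<times> {..<M} \<times> {..<M})" by force
qed auto

text \<open>\<open>t x y w\<close> stands for the value at a fixed point of the nested bracket \<open>[x, [y, w]]\<close>.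
  A list of pairs \<open>(c, v)\<close> stands for the product of the exponentials of the \<open>X = c v\<close>;
  \<open>bch1\<close> is its linear BCH term and \<open>bch3\<close> the value of its cubic one, with the
  normalisation of \<open>surr\<close>.\<close>

locale double_bracket =
  fixes t :: "'v::real_vector \<Rightarrow> 'v \<Rightarrow> 'v \<Rightarrow> real"
  assumes add_left: "t (x + x') y w = t x y w + t x' y w"
    and add_mid: "t x (y + y') w = t x y w + t x y' w"
    and add_right: "t x y (w + w') = t x y w + t x y w'"
    and scale_left: "t (c *\<^sub>R x) y w = c * t x y w"
    and scale_mid: "t x (c *\<^sub>R y) w = c * t x y w"
    and scale_right: "t x y (c *\<^sub>R w) = c * t x y w"
    and antisym: "t x y w = - t x w y"
    and jacobi: "t x y w + t y w x + t w x y = 0"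
begin

lemma self_right [simp]: "t x y y = 0"
  using antisym[of x y y] by simp

lemma zero [simp]: "t 0 y w = 0" "t x 0 w = 0" "t x y 0 = 0"
  using scale_left[of 0 x y w] scale_mid[of x 0 y w] scale_right[of x y 0 w] by auto

lemma minus: "t (- x) y w = - t x y w" "t x (- y) w = - t x y w" "t x y (- w) = - t x y w"
  using scale_left[of "-1" x y w] scale_mid[of x "-1" y w] scale_right[of x y "-1" w] by auto

lemma diff: "t (x - x') y w = t x y w - t x' y w" "t x (y - y') w = t x y w - t x y' w"
  "t x y (w - w') = t x y w - t x y w'"
  using add_left[of x "- x'" y w] add_mid[of x y "- y'" w] add_right[of x y w "- w'"]
  by (simp_all add: minus)

lemmas multilinear = add_left add_mid add_right scale_left scale_mid scale_right minus diff

lemma sum_left: "t (\<Sum>a\<in>A. f a) y w = (\<Sum>a\<in>A. t (f a) y w)"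
  by (induction A rule: infinite_finite_induct) (auto simp: add_left)

lemma sum_mid: "t x (\<Sum>a\<in>A. f a) w = (\<Sum>a\<in>A. t x (f a) w)"
  by (induction A rule: infinite_finite_induct) (auto simp: add_mid)

lemma sum_right: "t x y (\<Sum>a\<in>A. f a) = (\<Sum>a\<in>A. t x y (f a))"
  by (induction A rule: infinite_finite_induct) (auto simp: add_right)

lemma sum_list_right: "t x y (\<Sum>p\<leftarrow>L. f p) = (\<Sum>p\<leftarrow>L. t x y (f p))"
  by (induction L) (auto simp: add_right)

definition scaled :: "(real \<times> 'v) list \<Rightarrow> nat \<Rightarrow> 'v" where
  "scaled ds a = fst (ds ! a) *\<^sub>R snd (ds ! a)"

definition bch1 :: "(real \<times> 'v) list \<Rightarrow> 'v" where
  "bch1 ds = (\<Sum>a<length ds. scaled ds a)"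

text \<open>\<open>bch2_bracket ds y\<close> is the value of \<open>[y, 2 Z\<^sub>2]\<close>, where
  \<open>Z\<^sub>2 = (1/2) \<Sum>\<^sub>a\<^sub><\<^sub>b [X\<^sub>a, X\<^sub>b]\<close> is the quadratic BCH term.\<close>

definition bch2_bracket :: "(real \<times> 'v) list \<Rightarrow> 'v \<Rightarrow> real" where
  "bch2_bracket ds y = (\<Sum>b<length ds. \<Sum>a<b. t y (scaled ds a) (scaled ds b))"

fun word_bracket :: "(real \<times> 'v) list \<Rightarrow> nat list \<Rightarrow> real" where
  "word_bracket ds [a, b, c] = t (snd (ds ! a)) (snd (ds ! b)) (snd (ds ! c))"
| "word_bracket ds _ = 0"

definition bch3 :: "(real \<times> 'v) list \<Rightarrow> real" where
  "bch3 ds = (\<Sum>w\<in>{w. length w = 3 \<and> set w \<subseteq> {..<length ds}}.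
      logcoef w * prod_list (map (\<lambda>a. fst (ds ! a)) w) / 3 * word_bracket ds w)"

lemma bch3_eq_triple_sum: "bch3 ds = (\<Sum>a<length ds. \<Sum>b<length ds. \<Sum>c<length ds.
    logcoef [a, b, c] * t (scaled ds a) (scaled ds b) (scaled ds c)) / 3"
proof -
  let ?M = "length ds"
  have inj: "inj_on (\<lambda>(a, b, c). [a, b, c :: nat]) ({..<?M} \<times> {..<?M} \<times> {..<?M})"
    by (auto intro!: inj_onI)
  have "bch3 ds = (\<Sum>(a, b, c)\<in>{..<?M} \<times> {..<?M} \<times> {..<?M}. logcoef [a, b, c]
      * (fst (ds ! a) * fst (ds ! b) * fst (ds ! c)) / 3
      * t (snd (ds ! a)) (snd (ds ! b)) (snd (ds ! c)))"
    unfolding bch3_def words_length_3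
    by (subst sum.reindex[OF inj]) (simp add: case_prod_unfold mult.assoc)
  also have "\<dots> = (\<Sum>a<?M. \<Sum>b<?M. \<Sum>c<?M.
      logcoef [a, b, c] * t (scaled ds a) (scaled ds b) (scaled ds c) / 3)"
    by (simp add: sum.cartesian_product[symmetric] scaled_def multilinear mult_ac)
  finally show ?thesis by (simp add: sum_divide_distrib)
qed

lemma scaled_snoc:
  "a < length ds \<Longrightarrow> scaled (ds @ [(c, v)]) a = scaled ds a"
  "scaled (ds @ [(c, v)]) (length ds) = c *\<^sub>R v"
  by (auto simp: scaled_def nth_append)

lemma bch1_snoc: "bch1 (ds @ [(c, v)]) = bch1 ds + c *\<^sub>R v"
  by (simp add: bch1_def scaled_snoc)

lemma bch2_bracket_snoc:
  "bch2_bracket (ds @ [(c, v)]) w = bch2_bracket ds w + t w (bch1 ds) (c *\<^sub>R v)"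
  by (simp add: bch2_bracket_def bch1_def scaled_snoc sum_mid sum.distrib)

text \<open>The terms for \<open>(a, b)\<close> and \<open>(b, a)\<close> are combined with antisymmetry and the
  Jacobi identity.\<close>

lemma bch3_snoc_two_old_letters:
  fixes ds :: "(real \<times> 'v) list" and y :: 'v
  defines "M \<equiv> length ds" and "X \<equiv> scaled ds"
  shows "(\<Sum>a<M. \<Sum>b<M. logcoef [a, b, M] * t (X a) (X b) y + logcoef [a, M, b] * t (X a) y (X b)
      + logcoef [M, a, b] * t y (X a) (X b))
    = - 3/4 * bch2_bracket ds y + t (bch1 ds) (bch1 ds) y / 4"
proof -
  define K where "K a b = (if a < b then - 3/4 * t y (X a) (X b) else 0) + t (X a) (X b) y / 4"
    for a b
  have "(\<Sum>a<M. \<Sum>b<M. logcoef [a, b, M] * t (X a) (X b) y + logcoef [a, M, b] * t (X a) y (X b)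
      + logcoef [M, a, b] * t y (X a) (X b)) = (\<Sum>a<M. \<Sum>b<M. K a b)"
  proof (rule double_sum_eq_if_symmetrized_eq)
    fix a b assume ab: "a \<in> {..<M}" "b \<in> {..<M}"
    have "t (X a) y (X b) = - t (X a) (X b) y" "t (X b) y (X a) = - t (X b) (X a) y"
      "t y (X b) (X a) = - t y (X a) (X b)" "t (X a) y (X a) = - t (X a) (X a) y"
      by (auto intro: antisym)
    moreover have "t (X a) (X b) y + t (X b) y (X a) + t y (X a) (X b) = 0"
      by (rule jacobi)
    ultimately show "logcoef [a, b, M] * t (X a) (X b) y + logcoef [a, M, b] * t (X a) y (X b)
        + logcoef [M, a, b] * t y (X a) (X b) + (logcoef [b, a, M] * t (X b) (X a) y
        + logcoef [b, M, a] * t (X b) y (X a) + logcoef [M, b, a] * t y (X b) (X a))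
      = K a b + K b a"
      using ab by (cases a b rule: linorder_cases)
        (auto simp: K_def logcoef_triple ncoef_pair ncoef_triple)
  qed
  also have "\<dots> = (\<Sum>b<M. \<Sum>a<M. if a < b then - 3/4 * t y (X a) (X b) else 0)
      + (\<Sum>a<M. \<Sum>b<M. t (X a) (X b) y / 4)"
    by (simp add: K_def sum.distrib) (rule sum.swap)
  also have "(\<Sum>b<M. \<Sum>a<M. if a < b then - 3/4 * t y (X a) (X b) else 0)
      = (\<Sum>b<M. \<Sum>a<b. - 3/4 * t y (X a) (X b))"
  proof (rule sum.cong[OF refl])
    fix b assume "b \<in> {..<M}"
    then have lt: "{..<b} = {a \<in> {..<M}. a < b}" by auto
    show "(\<Sum>a<M. if a < b then - 3/4 * t y (X a) (X b) else 0)
        = (\<Sum>a<b. - 3/4 * t y (X a) (X b))"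
      unfolding lt by (subst sum.inter_filter) auto
  qed
  also have "\<dots> = - 3/4 * bch2_bracket ds y"
    by (simp add: bch2_bracket_def M_def X_def sum_distrib_left)
  also have "(\<Sum>a<M. \<Sum>b<M. t (X a) (X b) y / 4) = t (bch1 ds) (bch1 ds) y / 4"
    by (simp add: bch1_def M_def X_def sum_left sum_mid sum_divide_distrib, subst sum.swap, simp)
  finally show ?thesis .
qed

lemma bch3_snoc_one_old_letter:
  fixes ds :: "(real \<times> 'v) list" and y :: 'v
  defines "M \<equiv> length ds" and "X \<equiv> scaled ds"
  shows "(\<Sum>a<M. logcoef [a, M, M] * t (X a) y y + logcoef [M, a, M] * t y (X a) y
      + logcoef [M, M, a] * t y y (X a)) = t y y (bch1 ds) / 4"
proof -
  have "logcoef [a, M, M] * t (X a) y y + logcoef [M, a, M] * t y (X a) y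
      + logcoef [M, M, a] * t y y (X a) = t y y (X a) / 4" if "a < M" for a
    using that antisym[of y "X a" y] by (simp add: logcoef_triple ncoef_pair ncoef_triple)
  then have "(\<Sum>a<M. logcoef [a, M, M] * t (X a) y y + logcoef [M, a, M] * t y (X a) y
      + logcoef [M, M, a] * t y y (X a)) = (\<Sum>a<M. t y y (X a) / 4)"
    by (intro sum.cong) auto
  then show ?thesis
    by (simp add: bch1_def M_def X_def sum_right sum_divide_distrib)
qed

lemma bch3_snoc: "bch3 (ds @ [(c, v)]) = bch3 ds - bch2_bracket ds (c *\<^sub>R v) / 4
    + (t (bch1 ds) (bch1 ds) (c *\<^sub>R v) + t (c *\<^sub>R v) (c *\<^sub>R v) (bch1 ds)) / 12"
proof -
  let ?M = "length ds" and ?y = "c *\<^sub>R v"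
  define X' where "X' = scaled (ds @ [(c, v)])"
  have X': "X' a = scaled ds a" if "a < ?M" for a
    using that by (simp add: X'_def scaled_snoc)
  have X'_last: "X' ?M = ?y" by (simp add: X'_def scaled_snoc)
  have "3 * bch3 (ds @ [(c, v)])
      = (\<Sum>a<Suc ?M. \<Sum>b<Suc ?M. \<Sum>d<Suc ?M. logcoef [a, b, d] * t (X' a) (X' b) (X' d))"
    by (simp add: bch3_eq_triple_sum X'_def)
  also have "\<dots> = 3 * bch3 ds - 3/4 * bch2_bracket ds ?y + t (bch1 ds) (bch1 ds) ?y / 4
      + t ?y ?y (bch1 ds) / 4"
    unfolding sum_cube_lessThan_Suc X'_last
    using bch3_snoc_two_old_letters[of ds ?y] bch3_snoc_one_old_letter[of ds ?y]
    by (simp add: X' bch3_eq_triple_sum)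
  finally show ?thesis by (simp add: field_simps)
qed

lemma bch3_Nil: "bch3 [] = 0"
  by (simp add: bch3_eq_triple_sum)

lemma bch1_Nil: "bch1 [] = 0"
  by (simp add: bch1_def)

lemma bch1_single [simp]: "bch1 [(c, v)] = c *\<^sub>R v"
  by (simp add: bch1_def scaled_def)

lemma bch2_bracket_Nil: "bch2_bracket [] y = 0"
  by (simp add: bch2_bracket_def)

lemma bch2_bracket_single [simp]: "bch2_bracket [(c, v)] y = 0"
  by (simp add: bch2_bracket_def)

lemma bch2_bracket_add: "bch2_bracket ds (y + y') = bch2_bracket ds y + bch2_bracket ds y'"
  by (simp add: bch2_bracket_def add_left sum.distrib)

lemma bch1_append: "bch1 (A @ B) = bch1 A + bch1 B"
  by (induction B rule: rev_induct) (auto simp: bch1_Nil bch1_snoc simp flip: append_assoc)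

lemma bch2_bracket_append:
  "bch2_bracket (A @ B) y = bch2_bracket A y + bch2_bracket B y + t y (bch1 A) (bch1 B)"
  by (induction B rule: rev_induct)
    (auto simp: bch2_bracket_Nil bch1_Nil bch2_bracket_snoc bch1_snoc bch1_append multilinear
      algebra_simps simp flip: append_assoc)

lemma bch3_append: "bch3 (A @ B) = bch3 A + bch3 B
    + (bch2_bracket B (bch1 A) - bch2_bracket A (bch1 B)) / 4
    + (t (bch1 A) (bch1 A) (bch1 B) + t (bch1 B) (bch1 B) (bch1 A)) / 12"
proof (induction B rule: rev_induct)
  case Nil
  then show ?case by (simp add: bch3_Nil bch2_bracket_Nil bch1_Nil bch2_bracket_def)
next
  case (snoc x B)
  obtain c v where x: "x = (c, v)" by fastforce
  let ?y = "c *\<^sub>R v" and ?A = "bch1 A" and ?B = "bch1 B"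
  have "t ?A ?B ?y + t ?B ?y ?A + t ?y ?A ?B = 0" by (rule jacobi)
  moreover have "t ?B ?y ?A = - t ?B ?A ?y" "t ?y ?B ?A = - t ?y ?A ?B" by (rule antisym)+
  ultimately show ?case
    unfolding append_assoc[symmetric] x bch3_snoc bch2_bracket_snoc bch1_snoc bch1_append
      bch2_bracket_append bch2_bracket_add snoc
    by (simp add: add_left add_mid add_right field_simps)
qed

lemma bch3_single: "bch3 [(c, v)] = 0"
  using bch3_snoc[of "[]" c v] by (simp add: bch3_Nil bch2_bracket_Nil bch1_Nil)

lemma bch3_two: "bch3 [(c1, v1), (c2, v2)]
    = (t (c1 *\<^sub>R v1) (c1 *\<^sub>R v1) (c2 *\<^sub>R v2) + t (c2 *\<^sub>R v2) (c2 *\<^sub>R v2) (c1 *\<^sub>R v1)) / 12"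
  using bch3_snoc[of "[(c1, v1)]" c2 v2] by (simp add: bch3_single bch2_bracket_def bch1_def scaled_def)

lemma bch2_bracket_two: "bch2_bracket [(c1, v1), (c2, v2)] w = t w (c1 *\<^sub>R v1) (c2 *\<^sub>R v2)"
  by (simp add: bch2_bracket_def scaled_def)

lemma bch1_two: "bch1 [(c1, v1), (c2, v2)] = c1 *\<^sub>R v1 + c2 *\<^sub>R v2"
  by (simp add: bch1_def scaled_def)

lemma bch_rev_pair:
  "bch2_bracket (rev [(c1, v1), (c2, v2)]) w = - bch2_bracket [(c1, v1), (c2, v2)] w"
  "bch3 (rev [(c1, v1), (c2, v2)]) = bch3 [(c1, v1), (c2, v2)]"
  "bch1 (rev [(c1, v1), (c2, v2)]) = bch1 [(c1, v1), (c2, v2)]"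
  by (simp_all add: bch2_bracket_two bch3_two bch1_two antisym[of w "c1 *\<^sub>R v1"])

lemma bch_sandwich:
  assumes Q: "\<And>w. bch2_bracket Q w = 0"
    and B': "\<And>w. bch2_bracket B' w = - bch2_bracket B w" "bch3 B' = bch3 B" "bch1 B' = bch1 B"
  shows "bch3 (B @ Q @ B') = bch3 Q + 2 * bch3 B - bch2_bracket B (bch1 Q) / 2
      - bch2_bracket B (bch1 B) / 2 - t (bch1 B) (bch1 B) (bch1 Q) / 6
      + t (bch1 Q) (bch1 Q) (bch1 B) / 6"
    and "bch2_bracket (B @ Q @ B') w = 0"
    and "bch1 (B @ Q @ B') = bch1 B + bch1 B + bch1 Q"
proof -
  let ?b = "bch1 B" and ?q = "bch1 Q"
  have "t ?b ?q ?b = - t ?b ?b ?q" "t w ?q ?b = - t w ?b ?q" by (rule antisym)+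
  then show "bch3 (B @ Q @ B') = bch3 Q + 2 * bch3 B - bch2_bracket B (bch1 Q) / 2
      - bch2_bracket B (bch1 B) / 2 - t (bch1 B) (bch1 B) (bch1 Q) / 6
      + t (bch1 Q) (bch1 Q) (bch1 B) / 6"
    and "bch2_bracket (B @ Q @ B') w = 0"
    unfolding append_assoc[symmetric] bch3_append bch2_bracket_append bch1_append Q B'
      bch2_bracket_add
    by (simp_all add: add_left add_mid add_right field_simps)
  show "bch1 (B @ Q @ B') = bch1 B + bch1 B + bch1 Q"
    unfolding bch1_append B' by simp
qed

end

section \<open>The cubic term of the \<open>[KDBK]\<^sup>2\<close> pattern\<close>

text \<open>The factors \<open>B\<^sub>1\<^sup>\<dagger> \<dots> B\<^sub>K\<^sup>\<dagger> e\<^bsup>(2h/3) V\<^sub>c\<^esup> B\<^sub>K \<dots> B\<^sub>1\<close> at step \<open>h/2\<close>, with \<open>TT p\<close>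
  the kinetic energy of the pair \<open>p\<close> and \<open>TT p + VV p\<close> its Hamiltonian.\<close>

definition inner_block :: "('a \<Rightarrow> 'v::plus) \<Rightarrow> ('a \<Rightarrow> 'v) \<Rightarrow> 'v \<Rightarrow> 'a list \<Rightarrow> (real \<times> 'v) list" where
  "inner_block TT VV C ps = concat (map (\<lambda>p. [(- 1/2, TT p), (1/2, TT p + VV p)]) ps) @ [(2/3, C)]
      @ concat (map (\<lambda>p. [(1/2, TT p + VV p), (- 1/2, TT p)]) (rev ps))"

lemma inner_block_Cons: "inner_block TT VV C (p # ps) = [(- 1/2, TT p), (1/2, TT p + VV p)]
    @ inner_block TT VV C ps @ rev [(- 1/2, TT p), (1/2, TT p + VV p)]"
  by (simp add: inner_block_def)

text \<open>\<open>is_pot\<close> models the functions of the positions alone.\<close>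

locale double_bracket_potentials = double_bracket t for t :: "'v::real_vector \<Rightarrow> 'v \<Rightarrow> 'v \<Rightarrow> real" +
  fixes is_pot :: "'v \<Rightarrow> bool"
  assumes bracket_pots: "is_pot u \<Longrightarrow> is_pot w \<Longrightarrow> t x u w = 0"
    and pot_add: "is_pot u \<Longrightarrow> is_pot w \<Longrightarrow> is_pot (u + w)"
    and pot_zero: "is_pot 0"
begin

lemma pot_sum_list: "(\<And>p. p \<in> set ps \<Longrightarrow> is_pot (VV p)) \<Longrightarrow> is_pot (\<Sum>p\<leftarrow>ps. VV p)"
  by (induction ps) (auto intro: pot_add pot_zero)

lemma bracket_pots_swap: "is_pot u \<Longrightarrow> is_pot w \<Longrightarrow> t u w x = t w u x"
  using jacobi[of u w x] antisym[of w x u] bracket_pots[of u w x] by simp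

lemma bch1_inner_block: "bch1 (inner_block TT VV C ps) = (\<Sum>p\<leftarrow>ps. VV p) + (2/3) *\<^sub>R C"
proof (induction ps)
  case (Cons p ps)
  have "(1/2) *\<^sub>R VV p + (1/2) *\<^sub>R VV p = VV p"
    by (simp flip: scaleR_add_left)
  with Cons show ?case
    by (simp only: inner_block_Cons bch1_append bch_rev_pair) (simp add: bch1_two algebra_simps)
qed (simp add: inner_block_def)

lemma bch2_bracket_inner_block: "bch2_bracket (inner_block TT VV C ps) w = 0"
proof (induction ps arbitrary: w)
  case (Cons p ps)
  then show ?case
    unfolding inner_block_Cons by (rule bch_sandwich(2)) (simp_all only: bch_rev_pair)
qed (simp add: inner_block_def)

lemma bch3_inner_block_Cons:
  assumes pot_p: "is_pot (VV p)" and pot_Vs: "is_pot (\<Sum>q\<leftarrow>ps. VV q)" and pot_C: "is_pot C"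
    and kin: "\<And>x. t x (TT p) (VV p) = t x Tf (VV p)"
    and kin_kin: "t (TT p) (TT p) (VV p) = t Tf Tf (VV p)"
  shows "bch3 (inner_block TT VV C (p # ps)) = bch3 (inner_block TT VV C ps)
    + t Tf Tf (VV p) / 24 + t (VV p) Tf (VV p) / 12 + t (\<Sum>q\<leftarrow>ps. VV q) Tf (VV p) / 8
    + t C Tf (VV p) / 12"
proof -
  let ?Q = "inner_block TT VV C ps" and ?B = "[(- 1/2, TT p), (1/2, TT p + VV p)]"
  let ?Vs = "\<Sum>q\<leftarrow>ps. VV q"
  have kin_Tf: "t (TT p) Tf (VV p) = t Tf Tf (VV p)"
    using kin_kin kin[of "TT p"] by simp
  have kin': "t x (VV p) (TT p) = - t x Tf (VV p)" for x
    using kin[of x] antisym[of x "VV p" "TT p"] by simp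
  have commute: "t x (VV p) ?Vs = 0" "t x ?Vs (VV p) = 0" "t x (VV p) C = 0" "t x C (VV p) = 0"
     "t x C ?Vs = 0" "t x ?Vs C = 0" for x
    using bracket_pots pot_p pot_Vs pot_C by auto
  have bch1_B: "bch1 ?B = (1/2) *\<^sub>R VV p" by (simp add: bch1_two algebra_simps)
  have "bch3 (inner_block TT VV C (p # ps)) = bch3 ?Q + 2 * bch3 ?B - bch2_bracket ?B (bch1 ?Q) / 2
      - bch2_bracket ?B (bch1 ?B) / 2 - t (bch1 ?B) (bch1 ?B) (bch1 ?Q) / 6
      + t (bch1 ?Q) (bch1 ?Q) (bch1 ?B) / 6"
    unfolding inner_block_Cons
    by (rule bch_sandwich(1)) (simp_all only: bch2_bracket_inner_block bch_rev_pair)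
  also have "\<dots> = bch3 ?Q + t Tf Tf (VV p) / 24 + t (VV p) Tf (VV p) / 12 + t ?Vs Tf (VV p) / 8
      + t C Tf (VV p) / 12"
    unfolding bch1_B bch1_inner_block bch3_two bch2_bracket_two
    by (simp add: multilinear kin kin_Tf kin' commute field_simps)
  finally show ?thesis .
qed

lemma bch3_inner_block:
  assumes "\<And>p. p \<in> set ps \<Longrightarrow> is_pot (VV p)" and pot_C: "is_pot C"
    and "\<And>p x. p \<in> set ps \<Longrightarrow> t x (TT p) (VV p) = t x Tf (VV p)"
    and "\<And>p. p \<in> set ps \<Longrightarrow> t (TT p) (TT p) (VV p) = t Tf Tf (VV p)"
  shows "bch3 (inner_block TT VV C ps) = (\<Sum>p\<leftarrow>ps. t Tf Tf (VV p)) / 24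
      + (\<Sum>p\<leftarrow>ps. t (VV p) Tf (VV p)) / 12 + (\<Sum>p\<leftarrow>ps. t C Tf (VV p)) / 12
      - (t (\<Sum>p\<leftarrow>ps. VV p) (\<Sum>p\<leftarrow>ps. VV p) Tf + (\<Sum>p\<leftarrow>ps. t (VV p) Tf (VV p))) / 16"
  using assms(1,3,4)
proof (induction ps)
  case Nil
  then show ?case by (simp add: inner_block_def bch3_single)
next
  case (Cons p ps)
  let ?Vs = "\<Sum>q\<leftarrow>ps. VV q"
  have pot_p: "is_pot (VV p)" and pot_Vs: "is_pot ?Vs"
    using Cons.prems(1) by (auto intro: pot_sum_list)
  have "t (VV p) ?Vs Tf = t ?Vs (VV p) Tf" using bracket_pots_swap[OF pot_p pot_Vs] .
  moreover have "t ?Vs (VV p) Tf = - t ?Vs Tf (VV p)" "t (VV p) (VV p) Tf = - t (VV p) Tf (VV p)"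
    by (rule antisym)+
  ultimately show ?case
    using Cons bch3_inner_block_Cons[OF pot_p pot_Vs pot_C, of TT Tf]
    by (simp add: add_left add_mid field_simps)
qed

lemma bch3_KDBK2_pattern:
  assumes pot_VV: "\<And>p. p \<in> set ps \<Longrightarrow> is_pot (VV p)" and pot_C: "is_pot C"
    and "\<And>p x. p \<in> set ps \<Longrightarrow> t x (TT p) (VV p) = t x Tf (VV p)"
    and "\<And>p. p \<in> set ps \<Longrightarrow> t (TT p) (TT p) (VV p) = t Tf Tf (VV p)"
  shows "bch3 ([(1/6, C), (1/2, Tf)] @ inner_block TT VV C ps @ [(1/2, Tf), (1/6, C)])
     = (t (\<Sum>p\<leftarrow>ps. VV p) (\<Sum>p\<leftarrow>ps. VV p) Tf - (\<Sum>p\<leftarrow>ps. t (VV p) (VV p) Tf)) / 48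
       + t C C Tf / 72"
proof -
  let ?Q = "inner_block TT VV C ps" and ?Vs = "\<Sum>p\<leftarrow>ps. VV p"
  have "bch3 ([(1/6, C), (1/2, Tf)] @ ?Q @ rev [(1/6, C), (1/2, Tf)])
      = bch3 ?Q + 2 * bch3 [(1/6, C), (1/2, Tf)] - bch2_bracket [(1/6, C), (1/2, Tf)] (bch1 ?Q) / 2
      - bch2_bracket [(1/6, C), (1/2, Tf)] (bch1 [(1/6, C), (1/2, Tf)]) / 2
      - t (bch1 [(1/6, C), (1/2, Tf)]) (bch1 [(1/6, C), (1/2, Tf)]) (bch1 ?Q) / 6
      + t (bch1 ?Q) (bch1 ?Q) (bch1 [(1/6, C), (1/2, Tf)]) / 6"
    by (rule bch_sandwich(1)) (simp_all only: bch2_bracket_inner_block bch_rev_pair)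
  moreover have pot_Vs: "is_pot ?Vs" using pot_VV by (rule pot_sum_list)
  then have "t x C ?Vs = 0" "t x ?Vs C = 0" for x using bracket_pots pot_C by auto
  moreover have "t ?Vs C Tf = t C ?Vs Tf" using bracket_pots_swap[OF pot_Vs pot_C] .
  moreover have "t C ?Vs Tf = - t C Tf ?Vs" "t C Tf C = - t C C Tf" "t Tf C Tf = - t Tf Tf C"
    by (rule antisym)+
  moreover have "(\<Sum>p\<leftarrow>ps. t (VV p) (VV p) Tf) = - (\<Sum>p\<leftarrow>ps. t (VV p) Tf (VV p))"
    by (induction ps) (auto simp: antisym[of "VV _" "VV _"])
  ultimately show ?thesis
    using sum_list_right[of Tf Tf VV ps] sum_list_right[of C Tf VV ps]
    by (simp add: bch3_inner_block[OF assms] bch1_inner_block bch3_two bch2_bracket_two bch1_two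
        multilinear field_simps)
qed

end

section \<open>Functions quadratic in the momenta\<close>

abbreviation coord_shift :: "('n \<Rightarrow> real^3) \<Rightarrow> 'n \<Rightarrow> 3 \<Rightarrow> real \<Rightarrow> 'n \<Rightarrow> real^3" where
  "coord_shift x i k t \<equiv> x(i := x i + t *\<^sub>R axis k 1)"

text \<open>The potentials are only smooth away from collisions, so derivatives are required at
  injective configurations only.\<close>

definition has_coord_partials :: "(('n \<Rightarrow> real^3) \<Rightarrow> real) \<Rightarrow> ('n \<Rightarrow> 3 \<Rightarrow> ('n \<Rightarrow> real^3) \<Rightarrow> real)
    \<Rightarrow> ('n \<Rightarrow> 3 \<Rightarrow> 'n \<Rightarrow> 3 \<Rightarrow> ('n \<Rightarrow> real^3) \<Rightarrow> real) \<Rightarrow> bool" where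
  "has_coord_partials W g h \<longleftrightarrow>
    (\<forall>x i k. inj x \<longrightarrow> ((\<lambda>t. W (coord_shift x i k t)) has_real_derivative g i k x) (at 0))
  \<and> (\<forall>x i k j l. inj x \<longrightarrow> ((\<lambda>t. g j l (coord_shift x i k t)) has_real_derivative h j l i k x) (at 0))
  \<and> (\<forall>x i k j l. inj x \<longrightarrow> h j l i k x = h i k j l x)"

definition kin_pot_rep :: "('n::finite phase \<Rightarrow> real) \<Rightarrow> ('n \<Rightarrow> real) \<Rightarrow> (('n \<Rightarrow> real^3) \<Rightarrow> real)
    \<Rightarrow> ('n \<Rightarrow> 3 \<Rightarrow> ('n \<Rightarrow> real^3) \<Rightarrow> real) \<Rightarrow> ('n \<Rightarrow> 3 \<Rightarrow> 'n \<Rightarrow> 3 \<Rightarrow> ('n \<Rightarrow> real^3) \<Rightarrow> real)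
    \<Rightarrow> bool" where
  "kin_pot_rep f a W g h \<longleftrightarrow>
    (\<forall>z. f z = (\<Sum>j\<in>UNIV. a j * (norm (snd z j))\<^sup>2) + W (fst z)) \<and> has_coord_partials W g h"

lemma has_real_derivative_norm_sq_line:
  "((\<lambda>t. (norm (v + t *\<^sub>R w))\<^sup>2) has_real_derivative 2 * (v \<bullet> w)) (at 0)"
proof -
  have "(\<lambda>t. (norm (v + t *\<^sub>R w))\<^sup>2) = (\<lambda>t. v \<bullet> v + 2 * t * (v \<bullet> w) + t\<^sup>2 * (w \<bullet> w))"
    by (rule ext) (simp only: power2_norm_eq_inner inner_add_left inner_add_right inner_scaleR_left
        inner_scaleR_right inner_commute[of w v]; simp add: power2_eq_square algebra_simps)
  then show ?thesis by (auto intro!: derivative_eq_intros)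
qed

lemma eventually_inj_shift:
  fixes x :: "'n::finite \<Rightarrow> real^3"
  assumes "inj x"
  shows "\<forall>\<^sub>F t in nhds 0. inj (x(i := x i + t *\<^sub>R v))"
proof -
  have "\<forall>\<^sub>F t in nhds 0. x i + t *\<^sub>R v \<noteq> x j" if "j \<noteq> i" for j
  proof (rule tendsto_imp_eventually_ne)
    show "((\<lambda>t. x i + t *\<^sub>R v) \<longlongrightarrow> x i + 0 *\<^sub>R v) (nhds 0)"
      by (intro tendsto_intros) (auto simp: filterlim_ident)
    show "x i + 0 *\<^sub>R v \<noteq> x j" using assms that by (auto simp: inj_def)
  qed
  then have "\<forall>\<^sub>F t in nhds 0. \<forall>j. j \<noteq> i \<longrightarrow> x i + t *\<^sub>R v \<noteq> x j"
    by (intro eventually_all_finite) (auto intro: eventually_mono)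
  then show ?thesis
    by eventually_elim (use assms in \<open>auto simp: inj_def\<close>)
qed

lemma kin_pot_rep_dxi:
  assumes "kin_pot_rep f a W g h" "inj (fst z)"
  shows "dxi f i k z = g i k (fst z)"
proof -
  have f: "f (y, snd z) = (\<Sum>j\<in>UNIV. a j * (norm (snd z j))\<^sup>2) + W y" for y
    using assms(1) by (simp add: kin_pot_rep_def)
  have "((\<lambda>t. W (coord_shift (fst z) i k t)) has_real_derivative g i k (fst z)) (at 0)"
    using assms by (simp add: kin_pot_rep_def has_coord_partials_def)
  then have "((\<lambda>t. f (coord_shift (fst z) i k t, snd z)) has_real_derivative 0 + g i k (fst z)) (at 0)"
    unfolding f by (intro derivative_intros)
  then show ?thesis unfolding dxi_def by (simp add: DERIV_imp_deriv)
qed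

lemma kin_pot_rep_dpi:
  assumes "kin_pot_rep f a W g h"
  shows "dpi f i k z = 2 * a i * (snd z i $ k)"
proof -
  have f: "f (fst z, q) = (\<Sum>j\<in>UNIV. a j * (norm (q j))\<^sup>2) + W (fst z)" for q
    using assms by (simp add: kin_pot_rep_def)
  have "((\<lambda>t. a j * (norm (coord_shift (snd z) i k t j))\<^sup>2) has_real_derivative
       (if j = i then 2 * a i * (snd z i $ k) else 0)) (at 0)" for j
  proof (cases "j = i")
    case True
    have "((\<lambda>t. a i * (norm (snd z i + t *\<^sub>R axis k 1))\<^sup>2) has_real_derivative
        a i * (2 * (snd z i \<bullet> axis k 1))) (at 0)"
      by (intro DERIV_cmult has_real_derivative_norm_sq_line)
    then show ?thesis using True by (simp add: inner_axis algebra_simps)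
  qed simp
  then have "((\<lambda>t. f (fst z, coord_shift (snd z) i k t)) has_real_derivative
      (\<Sum>j\<in>UNIV. if j = i then 2 * a i * (snd z i $ k) else 0) + 0) (at 0)"
    unfolding f by (intro derivative_intros DERIV_sum)
  then show ?thesis unfolding dpi_def by (simp add: DERIV_imp_deriv)
qed

definition lb_coeff :: "('n \<Rightarrow> real) \<Rightarrow> ('n \<Rightarrow> 3 \<Rightarrow> ('n \<Rightarrow> real^3) \<Rightarrow> real) \<Rightarrow> ('n \<Rightarrow> real)
    \<Rightarrow> ('n \<Rightarrow> 3 \<Rightarrow> ('n \<Rightarrow> real^3) \<Rightarrow> real) \<Rightarrow> 'n \<Rightarrow> 3 \<Rightarrow> ('n \<Rightarrow> real^3) \<Rightarrow> real" where
  "lb_coeff a1 g1 a2 g2 i k x = 2 * a1 i * g2 i k x - 2 * a2 i * g1 i k x"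

lemma kin_pot_rep_lb:
  assumes "kin_pot_rep f1 a1 W1 g1 h1" "kin_pot_rep f2 a2 W2 g2 h2" "inj (fst z)"
  shows "lb f1 f2 z = (\<Sum>i\<in>UNIV. \<Sum>k\<in>UNIV. snd z i $ k * lb_coeff a1 g1 a2 g2 i k (fst z))"
  unfolding lb_def poisson_def using assms
  by (simp add: kin_pot_rep_dxi kin_pot_rep_dpi lb_coeff_def algebra_simps)

lemma sum_sum_delta:
  "(\<Sum>j\<in>(UNIV::'a::finite set). \<Sum>l\<in>(UNIV::'b::finite set). if j = i \<and> l = k then c else (0::real)) = c"
proof -
  have "(\<Sum>l\<in>(UNIV::'b set). if j = i \<and> l = k then c else 0) = (if j = i then c else 0)" for j
    by (cases "j = i") auto
  then show ?thesis by simp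
qed

lemma dpi_lb_kin_pot_rep:
  assumes r1: "kin_pot_rep f1 a1 W1 g1 h1" and r2: "kin_pot_rep f2 a2 W2 g2 h2" and inj: "inj (fst z)"
  shows "dpi (lb f1 f2) i k z = lb_coeff a1 g1 a2 g2 i k (fst z)"
proof -
  let ?x = "fst z" and ?p = "snd z"
  have "lb f1 f2 (?x, coord_shift ?p i k t) = (\<Sum>j\<in>UNIV. \<Sum>l\<in>UNIV.
      (?p j $ l + (if j = i \<and> l = k then t else 0)) * lb_coeff a1 g1 a2 g2 j l ?x)" for t
    using kin_pot_rep_lb[OF r1 r2, of "(?x, coord_shift ?p i k t)"] inj
    by (simp del: fun_upd_apply) (auto intro!: sum.cong simp: axis_def)
  moreover have "((\<lambda>t. \<Sum>j\<in>UNIV. \<Sum>l\<in>UNIV.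
      (?p j $ l + (if j = i \<and> l = k then t else 0)) * lb_coeff a1 g1 a2 g2 j l ?x)
    has_real_derivative (\<Sum>j\<in>UNIV. \<Sum>l\<in>UNIV.
      (if j = i \<and> l = k then 1 else 0) * lb_coeff a1 g1 a2 g2 j l ?x)) (at 0)"
    by (intro DERIV_sum) (auto intro!: derivative_eq_intros)
  ultimately show ?thesis unfolding dpi_def
    by (simp add: DERIV_imp_deriv if_distrib[of "\<lambda>c. c * _"] sum_sum_delta cong: if_cong)
qed

text \<open>The formula for the bracket holds at collision-free configurations only; these form
  an open set, so it can still be differentiated.\<close>

lemma dxi_lb_kin_pot_rep:
  assumes r1: "kin_pot_rep f1 a1 W1 g1 h1" and r2: "kin_pot_rep f2 a2 W2 g2 h2" and inj: "inj (fst z)"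
  shows "dxi (lb f1 f2) i k z = (\<Sum>j\<in>UNIV. \<Sum>l\<in>UNIV.
    snd z j $ l * (2 * a1 j * h2 j l i k (fst z) - 2 * a2 j * h1 j l i k (fst z)))"
proof -
  let ?x = "fst z" and ?p = "snd z"
  have near: "\<forall>\<^sub>F t in nhds 0. lb f1 f2 (coord_shift ?x i k t, ?p)
      = (\<Sum>j\<in>UNIV. \<Sum>l\<in>UNIV. ?p j $ l * lb_coeff a1 g1 a2 g2 j l (coord_shift ?x i k t))"
    using eventually_inj_shift[OF inj, of i "axis k 1"]
    by eventually_elim (use kin_pot_rep_lb[OF r1 r2] in auto)
  have "((\<lambda>t. g1 j l (coord_shift ?x i k t)) has_real_derivative h1 j l i k ?x) (at 0)"
    "((\<lambda>t. g2 j l (coord_shift ?x i k t)) has_real_derivative h2 j l i k ?x) (at 0)" for j l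
    using r1 r2 inj by (auto simp: kin_pot_rep_def has_coord_partials_def)
  then have "((\<lambda>t. \<Sum>j\<in>UNIV. \<Sum>l\<in>UNIV. ?p j $ l * lb_coeff a1 g1 a2 g2 j l (coord_shift ?x i k t))
      has_real_derivative (\<Sum>j\<in>UNIV. \<Sum>l\<in>UNIV.
        ?p j $ l * (2 * a1 j * h2 j l i k ?x - 2 * a2 j * h1 j l i k ?x))) (at 0)"
    unfolding lb_coeff_def by (intro DERIV_sum DERIV_cmult DERIV_diff)
  then have "((\<lambda>t. lb f1 f2 (coord_shift ?x i k t, ?p)) has_real_derivative (\<Sum>j\<in>UNIV. \<Sum>l\<in>UNIV.
      ?p j $ l * (2 * a1 j * h2 j l i k ?x - 2 * a2 j * h1 j l i k ?x))) (at 0)"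
    using DERIV_cong_ev[OF refl near refl] by simp
  then show ?thesis unfolding dxi_def by (simp add: DERIV_imp_deriv)
qed

lemma kin_pot_rep_lb_lb:
  assumes r1: "kin_pot_rep f1 a1 W1 g1 h1" and r2: "kin_pot_rep f2 a2 W2 g2 h2"
    and r3: "kin_pot_rep f3 a3 W3 g3 h3" and inj: "inj (fst z)"
  shows "lb f3 (lb f1 f2) z = (\<Sum>i\<in>UNIV. \<Sum>k\<in>UNIV.
      (\<Sum>j\<in>UNIV. \<Sum>l\<in>UNIV. snd z j $ l * (2 * a1 j * h2 j l i k (fst z) - 2 * a2 j * h1 j l i k (fst z)))
        * (2 * a3 i * snd z i $ k)
      - lb_coeff a1 g1 a2 g2 i k (fst z) * g3 i k (fst z))"
  unfolding lb_def[of f3] poisson_def dpi_lb_kin_pot_rep[OF r1 r2 inj] dxi_lb_kin_pot_rep[OF r1 r2 inj]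
  using r3 inj by (simp add: kin_pot_rep_dxi kin_pot_rep_dpi)

section \<open>Jets and the nested bracket\<close>

text \<open>The data of a function \<open>\<Sum>\<^sub>j a\<^sub>j |p\<^sub>j|\<^sup>2 + W(x)\<close> at a configuration that enter a
  double Poisson bracket: the coefficients \<open>a\<close>, the gradient and the Hessian of \<open>W\<close>.\<close>

type_synonym 'n jet = "(real^'n) \<times> ((real^3)^'n) \<times> ((((real^3)^'n)^3)^'n)"

definition sym_hess :: "((((real^3)^'n)^3)^'n) \<Rightarrow> 'n \<Rightarrow> 3 \<Rightarrow> 'n \<Rightarrow> 3 \<Rightarrow> real" where
  "sym_hess H j l i k = (H $ j $ l $ i $ k + H $ i $ k $ j $ l) / 2"

definition hess_term :: "('n::finite \<Rightarrow> real^3) \<Rightarrow> 'n jet \<Rightarrow> 'n jet \<Rightarrow> 'n jet \<Rightarrow> real" where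
  "hess_term p x y w = (\<Sum>(i, k, j, l)\<in>UNIV.
      p j $ l * p i $ k * fst x $ i * fst y $ j * sym_hess (snd (snd w)) j l i k)"

definition grad_term :: "'n::finite jet \<Rightarrow> 'n jet \<Rightarrow> 'n jet \<Rightarrow> real" where
  "grad_term y w x = (\<Sum>(i, k)\<in>UNIV. fst y $ i * fst (snd w) $ i $ k * fst (snd x) $ i $ k)"

text \<open>Symmetrizing the Hessian makes the Jacobi identity hold for all jets, not only for
  those of actual functions.\<close>

definition jet_bracket :: "('n::finite \<Rightarrow> real^3) \<Rightarrow> 'n jet \<Rightarrow> 'n jet \<Rightarrow> 'n jet \<Rightarrow> real" where
  "jet_bracket p x y w = 4 * (hess_term p x y w - hess_term p x w y) - 2 * (grad_term y w x - grad_term w y x)"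

lemma grad_term_swap: "grad_term y w x = grad_term y x w"
  by (simp add: grad_term_def mult_ac)

lemma hess_term_swap: "hess_term p x y w = hess_term p y x w"
  unfolding hess_term_def
  by (rule sum.reindex_bij_witness[where i="\<lambda>(i, k, j, l). (j, l, i, k)" and j="\<lambda>(i, k, j, l). (j, l, i, k)"])
     (auto simp: sym_hess_def add.commute mult_ac)

lemma hess_term_linear:
  "hess_term p (x + x') y w = hess_term p x y w + hess_term p x' y w"
  "hess_term p x (y + y') w = hess_term p x y w + hess_term p x y' w"
  "hess_term p x y (w + w') = hess_term p x y w + hess_term p x y w'"
  "hess_term p (c *\<^sub>R x) y w = c * hess_term p x y w"
  "hess_term p x (c *\<^sub>R y) w = c * hess_term p x y w"
  "hess_term p x y (c *\<^sub>R w) = c * hess_term p x y w"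
  by (simp_all add: hess_term_def sym_hess_def case_prod_unfold algebra_simps sum.distrib
      sum_distrib_left add_divide_distrib)

lemma grad_term_linear:
  "grad_term (y + y') w x = grad_term y w x + grad_term y' w x"
  "grad_term y (w + w') x = grad_term y w x + grad_term y w' x"
  "grad_term y w (x + x') = grad_term y w x + grad_term y w x'"
  "grad_term (c *\<^sub>R y) w x = c * grad_term y w x"
  "grad_term y (c *\<^sub>R w) x = c * grad_term y w x"
  "grad_term y w (c *\<^sub>R x) = c * grad_term y w x"
  by (simp_all add: grad_term_def case_prod_unfold algebra_simps sum.distrib sum_distrib_left)

lemma double_bracket_jet_bracket:
  fixes p :: "'n::finite \<Rightarrow> real^3"
  shows "double_bracket (jet_bracket p)"
proof
  fix x x' y w :: "'n::finite jet" and c :: real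
  show "jet_bracket p (x + x') y w = jet_bracket p x y w + jet_bracket p x' y w"
    "jet_bracket p y (x + x') w = jet_bracket p y x w + jet_bracket p y x' w"
    "jet_bracket p y w (x + x') = jet_bracket p y w x + jet_bracket p y w x'"
    "jet_bracket p (c *\<^sub>R x) y w = c * jet_bracket p x y w"
    "jet_bracket p y (c *\<^sub>R x) w = c * jet_bracket p y x w"
    "jet_bracket p y w (c *\<^sub>R x) = c * jet_bracket p y w x"
    "jet_bracket p x y w = - jet_bracket p x w y"
    by (simp_all add: jet_bracket_def hess_term_linear grad_term_linear algebra_simps)
  show "jet_bracket p x y w + jet_bracket p y w x + jet_bracket p w x y = 0"
    using hess_term_swap[of p x y w] hess_term_swap[of p x w y] hess_term_swap[of p y w x]
      grad_term_swap[of y w x] grad_term_swap[of w x y] grad_term_swap[of x y w]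
    by (simp add: jet_bracket_def algebra_simps)
qed

lemma sum_UNIV_pair:
  "(\<Sum>x\<in>(UNIV :: ('a::finite \<times> 'b::finite) set). F x) = (\<Sum>a\<in>UNIV. \<Sum>b\<in>UNIV. F (a, b))"
  by (simp add: sum.cartesian_product)

definition jet_of_rep :: "'n::finite phase \<Rightarrow> ('n \<Rightarrow> real) \<Rightarrow> ('n \<Rightarrow> 3 \<Rightarrow> ('n \<Rightarrow> real^3) \<Rightarrow> real)
    \<Rightarrow> ('n \<Rightarrow> 3 \<Rightarrow> 'n \<Rightarrow> 3 \<Rightarrow> ('n \<Rightarrow> real^3) \<Rightarrow> real) \<Rightarrow> 'n jet" where
  "jet_of_rep z a g h = (\<chi> j. a j, \<chi> i. \<chi> k. g i k (fst z), \<chi> j. \<chi> l. \<chi> i. \<chi> k. h j l i k (fst z))"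

lemma lb_lb_eq_jet_bracket_rep:
  assumes r1: "kin_pot_rep f1 a1 W1 g1 h1" and r2: "kin_pot_rep f2 a2 W2 g2 h2"
    and r3: "kin_pot_rep f3 a3 W3 g3 h3" and inj: "inj (fst z)"
  shows "lb f3 (lb f1 f2) z
    = jet_bracket (snd z) (jet_of_rep z a3 g3 h3) (jet_of_rep z a1 g1 h1) (jet_of_rep z a2 g2 h2)"
proof -
  let ?p = "snd z" and ?x = "fst z"
  have sym: "h1 j l i k ?x = h1 i k j l ?x" "h2 j l i k ?x = h2 i k j l ?x" for i k j l
    using r1 r2 inj by (auto simp: kin_pot_rep_def has_coord_partials_def)
  have hess: "hess_term ?p (jet_of_rep z a3 g3 h3) (jet_of_rep z a1 g1 h1) (jet_of_rep z a2 g2 h2)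
      = (\<Sum>i\<in>UNIV. \<Sum>k\<in>UNIV. \<Sum>j\<in>UNIV. \<Sum>l\<in>UNIV. ?p j $ l * ?p i $ k * a3 i * a1 j * h2 j l i k ?x)"
    "hess_term ?p (jet_of_rep z a3 g3 h3) (jet_of_rep z a2 g2 h2) (jet_of_rep z a1 g1 h1)
      = (\<Sum>i\<in>UNIV. \<Sum>k\<in>UNIV. \<Sum>j\<in>UNIV. \<Sum>l\<in>UNIV. ?p j $ l * ?p i $ k * a3 i * a2 j * h1 j l i k ?x)"
    unfolding hess_term_def sum_UNIV_pair by (simp_all add: jet_of_rep_def sym_hess_def sym)
  have grad: "grad_term (jet_of_rep z a1 g1 h1) (jet_of_rep z a2 g2 h2) (jet_of_rep z a3 g3 h3)
      = (\<Sum>i\<in>UNIV. \<Sum>k\<in>UNIV. a1 i * g2 i k ?x * g3 i k ?x)"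
    "grad_term (jet_of_rep z a2 g2 h2) (jet_of_rep z a1 g1 h1) (jet_of_rep z a3 g3 h3)
      = (\<Sum>i\<in>UNIV. \<Sum>k\<in>UNIV. a2 i * g1 i k ?x * g3 i k ?x)"
    unfolding grad_term_def sum_UNIV_pair by (simp_all add: jet_of_rep_def)
  show ?thesis
    unfolding kin_pot_rep_lb_lb[OF r1 r2 r3 inj] jet_bracket_def hess grad lb_coeff_def
    by (simp add: sum_distrib_right sum_distrib_left sum_subtractf sum.distrib algebra_simps)
qed

lemma kin_pot_rep_coeff:
  assumes "kin_pot_rep f a W g h"
  shows "a j = f (x, (\<lambda>_. 0)(j := axis 1 1)) - f (x, \<lambda>_. 0)"
proof -
  have "(\<Sum>i\<in>UNIV. a i * (norm (((\<lambda>_. 0)(j := axis 1 (1::real))) i :: real^3))\<^sup>2)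
      = (\<Sum>i\<in>UNIV. if i = j then a j else 0)"
    by (intro sum.cong) auto
  then show ?thesis using assms by (simp add: kin_pot_rep_def)
qed

lemma jet_of_rep_unique:
  assumes r: "kin_pot_rep f a W g h" and r': "kin_pot_rep f a' W' g' h'" and inj: "inj (fst z)"
  shows "jet_of_rep z a g h = jet_of_rep z a' g' h'"
proof -
  have a: "a = a'"
    using kin_pot_rep_coeff[OF r] kin_pot_rep_coeff[OF r'] by (intro ext) metis
  have g: "g i k y = g' i k y" if "inj y" for i k y
    using kin_pot_rep_dxi[OF r, of "(y, snd z)"] kin_pot_rep_dxi[OF r', of "(y, snd z)"] that by simp
  have h: "h j l i k (fst z) = h' j l i k (fst z)" for j l i k
  proof -
    have d: "((\<lambda>t. g j l (coord_shift (fst z) i k t)) has_real_derivative h j l i k (fst z)) (at 0)"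
      and d': "((\<lambda>t. g' j l (coord_shift (fst z) i k t)) has_real_derivative h' j l i k (fst z)) (at 0)"
      using r r' inj by (auto simp: kin_pot_rep_def has_coord_partials_def)
    have "\<forall>\<^sub>F t in nhds 0. g j l (coord_shift (fst z) i k t) = g' j l (coord_shift (fst z) i k t)"
      using eventually_inj_shift[OF inj, of i "axis k 1"] by eventually_elim (use g in auto)
    from DERIV_cong_ev[OF refl this refl] d'
    have "((\<lambda>t. g j l (coord_shift (fst z) i k t)) has_real_derivative h' j l i k (fst z)) (at 0)"
      by simp
    with d show ?thesis using DERIV_unique by blast
  qed
  show ?thesis unfolding jet_of_rep_def a by (simp add: vec_eq_iff g[OF inj] h)
qed

definition has_kin_pot_rep :: "('n::finite phase \<Rightarrow> real) \<Rightarrow> bool" where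
  "has_kin_pot_rep f \<longleftrightarrow> (\<exists>a W g h. kin_pot_rep f a W g h)"

text \<open>By \<open>jet_of_rep_unique\<close> the choice is immaterial at collision-free configurations,
  the only ones where jets are used.\<close>

definition jet :: "'n::finite phase \<Rightarrow> ('n phase \<Rightarrow> real) \<Rightarrow> 'n jet" where
  "jet z f = (SOME d. \<exists>a W g h. kin_pot_rep f a W g h \<and> d = jet_of_rep z a g h)"

lemma jet_eq_jet_of_rep:
  assumes r: "kin_pot_rep f a W g h" and inj: "inj (fst z)"
  shows "jet z f = jet_of_rep z a g h"
  unfolding jet_def
proof (rule someI2)
  show "\<exists>a' W' g' h'. kin_pot_rep f a' W' g' h' \<and> jet_of_rep z a g h = jet_of_rep z a' g' h'"
    using r by blast
next
  fix d assume "\<exists>a' W' g' h'. kin_pot_rep f a' W' g' h' \<and> d = jet_of_rep z a' g' h'"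
  then show "d = jet_of_rep z a g h" using jet_of_rep_unique[OF r _ inj] by metis
qed

lemma lb_lb_eq_jet_bracket:
  assumes "has_kin_pot_rep f1" "has_kin_pot_rep f2" "has_kin_pot_rep f3" "inj (fst z)"
  shows "lb f3 (lb f1 f2) z = jet_bracket (snd z) (jet z f3) (jet z f1) (jet z f2)"
proof -
  obtain a1 W1 g1 h1 a2 W2 g2 h2 a3 W3 g3 h3 where r1: "kin_pot_rep f1 a1 W1 g1 h1"
    and r2: "kin_pot_rep f2 a2 W2 g2 h2" and r3: "kin_pot_rep f3 a3 W3 g3 h3"
    using assms(1-3) unfolding has_kin_pot_rep_def by blast
  show ?thesis
    unfolding lb_lb_eq_jet_bracket_rep[OF r1 r2 r3 assms(4)] jet_eq_jet_of_rep[OF r1 assms(4)]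
      jet_eq_jet_of_rep[OF r2 assms(4)] jet_eq_jet_of_rep[OF r3 assms(4)] ..
qed

lemma kin_pot_rep_zero: "kin_pot_rep (\<lambda>z. 0) (\<lambda>j. 0) (\<lambda>x. 0) (\<lambda>i k x. 0) (\<lambda>j l i k x. 0)"
  by (simp add: kin_pot_rep_def has_coord_partials_def)

lemma kin_pot_rep_add:
  "kin_pot_rep f1 a1 W1 g1 h1 \<Longrightarrow> kin_pot_rep f2 a2 W2 g2 h2 \<Longrightarrow>
   kin_pot_rep (\<lambda>z. f1 z + f2 z) (\<lambda>j. a1 j + a2 j) (\<lambda>x. W1 x + W2 x)
     (\<lambda>i k x. g1 i k x + g2 i k x) (\<lambda>j l i k x. h1 j l i k x + h2 j l i k x)"
  unfolding kin_pot_rep_def has_coord_partials_def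
  by (auto intro!: DERIV_add simp: algebra_simps sum.distrib)

lemma kin_pot_rep_scale:
  "kin_pot_rep f a W g h \<Longrightarrow>
   kin_pot_rep (\<lambda>z. c * f z) (\<lambda>j. c * a j) (\<lambda>x. c * W x) (\<lambda>i k x. c * g i k x) (\<lambda>j l i k x. c * h j l i k x)"
  unfolding kin_pot_rep_def has_coord_partials_def
  by (auto intro!: DERIV_cmult simp: algebra_simps sum_distrib_left)

lemma jet_of_rep_zero: "jet_of_rep z (\<lambda>j. 0) (\<lambda>i k x. 0) (\<lambda>j l i k x. 0) = 0"
  by (simp add: jet_of_rep_def vec_eq_iff zero_prod_def)

lemma jet_of_rep_add:
  "jet_of_rep z (\<lambda>j. a1 j + a2 j) (\<lambda>i k x. g1 i k x + g2 i k x) (\<lambda>j l i k x. h1 j l i k x + h2 j l i k x)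
   = jet_of_rep z a1 g1 h1 + jet_of_rep z a2 g2 h2"
  by (simp add: jet_of_rep_def vec_eq_iff)

lemma has_kin_pot_rep_zero: "has_kin_pot_rep (\<lambda>z. 0)"
  unfolding has_kin_pot_rep_def using kin_pot_rep_zero by blast

lemma has_kin_pot_rep_add: "has_kin_pot_rep f1 \<Longrightarrow> has_kin_pot_rep f2 \<Longrightarrow> has_kin_pot_rep (\<lambda>z. f1 z + f2 z)"
  unfolding has_kin_pot_rep_def using kin_pot_rep_add by blast

lemma has_kin_pot_rep_scale: "has_kin_pot_rep f \<Longrightarrow> has_kin_pot_rep (\<lambda>z. c * f z)"
  unfolding has_kin_pot_rep_def using kin_pot_rep_scale by blast

lemma has_kin_pot_rep_sum:
  "(\<And>s. s \<in> A \<Longrightarrow> has_kin_pot_rep (F s)) \<Longrightarrow> has_kin_pot_rep (\<lambda>z. \<Sum>s\<in>A. F s z)"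
  by (induction A rule: infinite_finite_induct) (auto simp: has_kin_pot_rep_zero intro!: has_kin_pot_rep_add)

lemma has_kin_pot_rep_sum_list:
  "(\<And>s. s \<in> set L \<Longrightarrow> has_kin_pot_rep (F s)) \<Longrightarrow> has_kin_pot_rep (\<lambda>z. \<Sum>s\<leftarrow>L. F s z)"
  by (induction L) (auto simp: has_kin_pot_rep_zero intro!: has_kin_pot_rep_add)

lemma jet_zero: "inj (fst z) \<Longrightarrow> jet z (\<lambda>z. 0) = 0"
  using jet_eq_jet_of_rep[OF kin_pot_rep_zero] by (simp add: jet_of_rep_zero)

lemma jet_add:
  assumes "has_kin_pot_rep f1" "has_kin_pot_rep f2" "inj (fst z)"
  shows "jet z (\<lambda>z. f1 z + f2 z) = jet z f1 + jet z f2"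
proof -
  obtain a1 W1 g1 h1 a2 W2 g2 h2 where r1: "kin_pot_rep f1 a1 W1 g1 h1"
    and r2: "kin_pot_rep f2 a2 W2 g2 h2"
    using assms unfolding has_kin_pot_rep_def by blast
  show ?thesis
    unfolding jet_eq_jet_of_rep[OF kin_pot_rep_add[OF r1 r2] assms(3)] jet_eq_jet_of_rep[OF r1 assms(3)]
      jet_eq_jet_of_rep[OF r2 assms(3)] jet_of_rep_add ..
qed

lemma jet_sum_list:
  assumes "\<And>s. s \<in> set L \<Longrightarrow> has_kin_pot_rep (F s)" "inj (fst z)"
  shows "jet z (\<lambda>z. \<Sum>s\<leftarrow>L. F s z) = (\<Sum>s\<leftarrow>L. jet z (F s))"
  using assms(1)
proof (induction L)
  case Nil
  then show ?case using jet_zero[OF assms(2)] by simp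
next
  case (Cons s L)
  then show ?case
    using jet_add[OF _ has_kin_pot_rep_sum_list assms(2), of "F s" L F] by simp
qed

section \<open>The N-body terms as functions quadratic in the momenta\<close>

lemma has_real_derivative_norm_line:
  fixes u v :: "real^3"
  assumes "u \<noteq> 0"
  shows "((\<lambda>t. norm (u + t *\<^sub>R v)) has_real_derivative (u \<bullet> v) / norm u) (at 0)"
proof -
  have pos: "0 < (norm (u + 0 *\<^sub>R v))\<^sup>2" using assms by simp
  have "((\<lambda>t. sqrt ((norm (u + t *\<^sub>R v))\<^sup>2)) has_real_derivative
      inverse (sqrt ((norm (u + 0 *\<^sub>R v))\<^sup>2)) / 2 * (2 * (u \<bullet> v))) (at 0)"
    by (rule DERIV_chain2[OF DERIV_real_sqrt[OF pos] has_real_derivative_norm_sq_line])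
  then show ?thesis using assms by (simp add: divide_simps)
qed

lemma has_real_derivative_inverse_norm_line:
  fixes u v :: "real^3"
  assumes "u \<noteq> 0"
  shows "((\<lambda>t. 1 / norm (u + t *\<^sub>R v)) has_real_derivative - (u \<bullet> v) / norm u ^ 3) (at 0)"
proof -
  have "((\<lambda>t. 1 / norm (u + t *\<^sub>R v)) has_real_derivative
     (0 * norm (u + 0 *\<^sub>R v) - 1 * ((u \<bullet> v) / norm u)) / (norm (u + 0 *\<^sub>R v) * norm (u + 0 *\<^sub>R v))) (at 0)"
    by (rule DERIV_divide[OF DERIV_const has_real_derivative_norm_line[OF assms]]) (use assms in simp)
  then show ?thesis using assms by (simp add: divide_simps power3_eq_cube mult.assoc)
qed

lemma has_real_derivative_component_div_norm_cube_line:
  fixes u v :: "real^3"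
  assumes "u \<noteq> 0"
  shows "((\<lambda>t. (u + t *\<^sub>R v) $ l / norm (u + t *\<^sub>R v) ^ 3) has_real_derivative
     v $ l / norm u ^ 3 - 3 * (u $ l) * (u \<bullet> v) / norm u ^ 5) (at 0)"
proof -
  have "((\<lambda>t. (u + t *\<^sub>R v) $ l) has_real_derivative v $ l) (at 0)"
    by (auto intro!: derivative_eq_intros)
  moreover have "((\<lambda>t. norm (u + t *\<^sub>R v) ^ 3) has_real_derivative
      of_nat 3 * ((u \<bullet> v) / norm u * norm (u + 0 *\<^sub>R v) ^ (3 - Suc 0))) (at 0)"
    by (rule DERIV_power[OF has_real_derivative_norm_line[OF assms]])
  ultimately have "((\<lambda>t. (u + t *\<^sub>R v) $ l / norm (u + t *\<^sub>R v) ^ 3) has_real_derivative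
     (v $ l * norm (u + 0 *\<^sub>R v) ^ 3 - (u + 0 *\<^sub>R v) $ l
       * (of_nat 3 * ((u \<bullet> v) / norm u * norm (u + 0 *\<^sub>R v) ^ (3 - Suc 0))))
      / (norm (u + 0 *\<^sub>R v) ^ 3 * norm (u + 0 *\<^sub>R v) ^ 3)) (at 0)"
    by (rule DERIV_divide) (use assms in simp)
  then show ?thesis
    by (rule DERIV_cong) (use assms in \<open>simp add: field_simps eval_nat_numeral\<close>)
qed

definition kin_coeff :: "('n \<Rightarrow> real) \<Rightarrow> 'n \<Rightarrow> 'n \<Rightarrow> real" where
  "kin_coeff m i j = (if j = i then 1 / (2 * m i) else 0)"

lemma kin_pot_rep_Tk: "kin_pot_rep (Tk m i) (kin_coeff m i) (\<lambda>x. 0) (\<lambda>i k x. 0) (\<lambda>j l i k x. 0)"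
proof -
  have "(\<Sum>j\<in>UNIV. kin_coeff m i j * (norm (snd z j))\<^sup>2) = Tk m i z" for z
    by (simp add: kin_coeff_def Tk_def if_distrib[of "\<lambda>c. c * _"] cong: if_cong)
  then show ?thesis by (simp add: kin_pot_rep_def has_coord_partials_def)
qed

lemma kin_pot_rep_Tkin: "kin_pot_rep (Tkin m) (\<lambda>j. 1 / (2 * m j)) (\<lambda>x. 0) (\<lambda>i k x. 0) (\<lambda>j l i k x. 0)"
  by (simp add: kin_pot_rep_def has_coord_partials_def Tkin_def Tk_def)

definition pair_sign :: "'n \<Rightarrow> 'n \<Rightarrow> 'n \<Rightarrow> real" where
  "pair_sign a b i = (if i = a then 1 else if i = b then -1 else 0)"

definition pair_pot_grad :: "real \<Rightarrow> ('n \<Rightarrow> real) \<Rightarrow> 'n \<Rightarrow> 'n \<Rightarrow> 'n \<Rightarrow> 3 \<Rightarrow> ('n \<Rightarrow> real^3) \<Rightarrow> real" where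
  "pair_pot_grad G m a b i k x =
     G * m a * m b * pair_sign a b i * ((x a - x b) $ k / norm (x a - x b) ^ 3)"

definition pair_pot_hess :: "real \<Rightarrow> ('n \<Rightarrow> real) \<Rightarrow> 'n \<Rightarrow> 'n \<Rightarrow> 'n \<Rightarrow> 3 \<Rightarrow> 'n \<Rightarrow> 3 \<Rightarrow> ('n \<Rightarrow> real^3) \<Rightarrow> real" where
  "pair_pot_hess G m a b j l i k x = G * m a * m b * pair_sign a b j * pair_sign a b i *
     ((if l = k then 1 else 0) / norm (x a - x b) ^ 3
      - 3 * ((x a - x b) $ l) * ((x a - x b) $ k) / norm (x a - x b) ^ 5)"

lemma shift_diff:
  assumes "a \<noteq> b"
  shows "coord_shift x i k t a - coord_shift x i k t b = (x a - x b) + t *\<^sub>R (pair_sign a b i *\<^sub>R axis k (1::real))"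
  using assms by (auto simp: pair_sign_def algebra_simps)

lemma kin_pot_rep_Vp:
  fixes a b :: "'n::finite"
  assumes ab: "a \<noteq> b"
  shows "kin_pot_rep (Vp G m a b) (\<lambda>j. 0) (\<lambda>x. - G * m a * m b / dist (x a) (x b))
    (pair_pot_grad G m a b) (pair_pot_hess G m a b)"
  unfolding kin_pot_rep_def has_coord_partials_def
proof (intro conjI allI impI)
  fix z :: "'n phase"
  show "Vp G m a b z = (\<Sum>j\<in>UNIV. 0 * (norm (snd z j))\<^sup>2) + - G * m a * m b / dist (fst z a) (fst z b)"
    by (simp add: Vp_def)
next
  fix x :: "'n \<Rightarrow> real^3" and i :: 'n and k :: 3 assume "inj x"
  then have u: "x a - x b \<noteq> 0" using ab by (auto simp: inj_def)
  let ?v = "pair_sign a b i *\<^sub>R axis k (1::real)"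
  have "((\<lambda>t. - G * m a * m b / dist (coord_shift x i k t a) (coord_shift x i k t b)) has_real_derivative
      - G * m a * m b * (- ((x a - x b) \<bullet> ?v) / norm (x a - x b) ^ 3)) (at 0)"
    unfolding dist_norm shift_diff[OF ab]
    using DERIV_cmult[OF has_real_derivative_inverse_norm_line[OF u, of ?v], of "- G * m a * m b"]
    by simp
  then show "((\<lambda>t. - G * m a * m b / dist (coord_shift x i k t a) (coord_shift x i k t b))
      has_real_derivative pair_pot_grad G m a b i k x) (at 0)"
    by (rule DERIV_cong) (use u in \<open>simp add: pair_pot_grad_def inner_axis field_simps\<close>)
next
  fix x :: "'n \<Rightarrow> real^3" and i j :: 'n and k l :: 3 assume "inj x"
  then have u: "x a - x b \<noteq> 0" using ab by (auto simp: inj_def)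
  let ?v = "pair_sign a b i *\<^sub>R axis k (1::real)"
  have axis_l: "axis k (1::real) $ l = (if l = k then 1 else 0)" by (simp add: axis_def)
  have "((\<lambda>t. G * m a * m b * pair_sign a b j
        * (((x a - x b) + t *\<^sub>R ?v) $ l / norm ((x a - x b) + t *\<^sub>R ?v) ^ 3))
      has_real_derivative G * m a * m b * pair_sign a b j
        * (?v $ l / norm (x a - x b) ^ 3 - 3 * ((x a - x b) $ l) * ((x a - x b) \<bullet> ?v) / norm (x a - x b) ^ 5))
      (at 0)"
    by (intro DERIV_cmult has_real_derivative_component_div_norm_cube_line u)
  then show "((\<lambda>t. pair_pot_grad G m a b j l (coord_shift x i k t)) has_real_derivative
      pair_pot_hess G m a b j l i k x) (at 0)"
    unfolding pair_pot_grad_def shift_diff[OF ab]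
    by (rule DERIV_cong) (auto simp: pair_pot_hess_def inner_axis axis_l algebra_simps)
next
  fix x :: "'n \<Rightarrow> real^3" and i j :: 'n and k l :: 3
  show "pair_pot_hess G m a b j l i k x = pair_pot_hess G m a b i k j l x"
    by (simp add: pair_pot_hess_def algebra_simps)
qed

text \<open>For \<open>i = j\<close> the distance is \<open>0\<close>, so \<open>Vp G m i i\<close> is \<open>0\<close> by the division convention.\<close>

lemma has_kin_pot_rep_Vp: "has_kin_pot_rep (Vp G m i j)"
proof (cases "i = j")
  case True
  then have "Vp G m i j = (\<lambda>z. 0)" by (auto simp: Vp_def)
  then show ?thesis by (simp add: has_kin_pot_rep_zero)
next
  case False
  then show ?thesis unfolding has_kin_pot_rep_def using kin_pot_rep_Vp by blast
qed

lemma has_kin_pot_rep_Tk: "has_kin_pot_rep (Tk m i)"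
  using kin_pot_rep_Tk unfolding has_kin_pot_rep_def by blast

lemma has_kin_pot_rep_Tkin: "has_kin_pot_rep (Tkin m)"
  using kin_pot_rep_Tkin unfolding has_kin_pot_rep_def by blast

lemma has_kin_pot_rep_Vs: "has_kin_pot_rep (Vs G m ps)"
  unfolding Vs_def case_prod_unfold by (intro has_kin_pot_rep_sum_list has_kin_pot_rep_Vp)

lemma has_kin_pot_rep_Vpot: "has_kin_pot_rep (Vpot G m)"
proof -
  have "has_kin_pot_rep (\<lambda>z. if i \<noteq> j then Vp G m i j z else 0)" for i j
    by (cases "i = j") (simp_all add: has_kin_pot_rep_zero has_kin_pot_rep_Vp)
  then have "has_kin_pot_rep (\<lambda>z. (1/2) * (\<Sum>i\<in>UNIV. \<Sum>j\<in>UNIV. if i \<noteq> j then Vp G m i j z else 0))"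
    by (intro has_kin_pot_rep_scale has_kin_pot_rep_sum)
  then show ?thesis by (simp add: Vpot_def[abs_def])
qed

lemma has_kin_pot_rep_Vc: "has_kin_pot_rep (Vc G m ps)"
proof -
  have "has_kin_pot_rep (\<lambda>z. Vpot G m z + (- 1) * Vs G m ps z)"
    by (intro has_kin_pot_rep_add has_kin_pot_rep_scale has_kin_pot_rep_Vpot has_kin_pot_rep_Vs)
  then show ?thesis by (simp add: Vc_def[abs_def])
qed

lemma jet_Tkin: "inj (fst z) \<Longrightarrow> jet z (Tkin m) = (\<chi> j. 1 / (2 * m j), 0, 0)"
  using jet_eq_jet_of_rep[OF kin_pot_rep_Tkin] by (simp add: jet_of_rep_def zero_vec_def)

lemma jet_pair_kin:
  "inj (fst z) \<Longrightarrow> jet z (\<lambda>z. Tk m i z + Tk m j z) = (\<chi> l. kin_coeff m i l + kin_coeff m j l, 0, 0)"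
  using jet_eq_jet_of_rep[OF kin_pot_rep_add[OF kin_pot_rep_Tk kin_pot_rep_Tk]]
  by (simp add: jet_of_rep_def zero_vec_def)

lemma fst_jet_position_only:
  assumes "has_kin_pot_rep f" "\<And>x q q'. f (x, q) = f (x, q')" "inj (fst z)"
  shows "fst (jet z f) = 0"
proof -
  obtain a W g h where r: "kin_pot_rep f a W g h" using assms(1) unfolding has_kin_pot_rep_def by blast
  have "a j = 0" for j
    using kin_pot_rep_coeff[OF r, of j "fst z"] assms(2)[of "fst z" "(\<lambda>_. 0)(j := axis 1 1)" "\<lambda>_. 0"]
    by simp
  then show ?thesis unfolding jet_eq_jet_of_rep[OF r assms(3)] by (simp add: jet_of_rep_def vec_eq_iff)
qed

definition pot_jet_supported :: "'n set \<Rightarrow> 'n::finite jet \<Rightarrow> bool" where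
  "pot_jet_supported P d \<longleftrightarrow> fst d = 0 \<and> (\<forall>i k. i \<notin> P \<longrightarrow> fst (snd d) $ i $ k = 0)
     \<and> (\<forall>j l i k. j \<notin> P \<or> i \<notin> P \<longrightarrow> snd (snd d) $ j $ l $ i $ k = 0)"

lemma jet_Vp_supported: "inj (fst z) \<Longrightarrow> pot_jet_supported {i, j} (jet z (Vp G m i j))"
proof (cases "i = j")
  case True
  then have "Vp G m i j = (\<lambda>z. 0)" by (auto simp: Vp_def)
  then show "inj (fst z) \<Longrightarrow> ?thesis" by (simp add: jet_zero pot_jet_supported_def)
next
  case False
  then show "inj (fst z) \<Longrightarrow> ?thesis"
    by (auto simp: jet_eq_jet_of_rep[OF kin_pot_rep_Vp] pot_jet_supported_def jet_of_rep_def
        pair_pot_grad_def pair_pot_hess_def pair_sign_def zero_vec_def)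
qed

lemma sym_hess_supported:
  "pot_jet_supported P V \<Longrightarrow> j \<notin> P \<or> i \<notin> P \<Longrightarrow> sym_hess (snd (snd V)) j l i k = 0"
  unfolding pot_jet_supported_def sym_hess_def by auto

lemma double_bracket_potentials_jet_bracket:
  fixes p :: "'n::finite \<Rightarrow> real^3"
  shows "double_bracket_potentials (jet_bracket p) (\<lambda>d. fst d = 0)"
proof -
  interpret double_bracket "jet_bracket p" by (rule double_bracket_jet_bracket)
  show ?thesis
    by unfold_locales (simp_all add: jet_bracket_def hess_term_def grad_term_def)
qed

text \<open>A pair potential depends on the positions of its two particles only, so on it the
  pair kinetic energy \<open>T\<^sub>i + T\<^sub>j\<close> acts like the total kinetic energy.\<close>

lemma jet_bracket_kinetic_mid:
  assumes V: "pot_jet_supported P V" and agree: "\<And>j. j \<in> P \<Longrightarrow> a $ j = a' $ j"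
  shows "jet_bracket p x (a, 0, 0) V = jet_bracket p x (a', 0, 0) V"
proof -
  have "hess_term p x (a, 0, 0) V = hess_term p x (a', 0, 0) V"
    unfolding hess_term_def
    by (intro sum.cong refl) (use sym_hess_supported[OF V] agree in \<open>fastforce split: prod.split\<close>)
  moreover have "grad_term (a, 0, 0) V x = grad_term (a', 0, 0) V x"
    unfolding grad_term_def
    by (intro sum.cong refl) (use V agree in \<open>fastforce simp: pot_jet_supported_def\<close>)
  ultimately show ?thesis
    using V by (simp add: jet_bracket_def hess_term_def grad_term_def pot_jet_supported_def)
qed

lemma jet_bracket_kinetic_left:
  assumes V: "pot_jet_supported P V" and agree: "\<And>j. j \<in> P \<Longrightarrow> a $ j = a' $ j"
  shows "jet_bracket p (a, 0, 0) x V = jet_bracket p (a', 0, 0) x V"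
proof -
  have "hess_term p (a, 0, 0) x V = hess_term p (a', 0, 0) x V"
    unfolding hess_term_def
    by (intro sum.cong refl) (use sym_hess_supported[OF V] agree in \<open>fastforce split: prod.split\<close>)
  then show ?thesis
    using V by (simp add: jet_bracket_def hess_term_def grad_term_def pot_jet_supported_def)
qed

section \<open>The \<open>[KDBK]\<^sup>2\<close> scheme\<close>

lemma surr_KDBK2_0: "surr (KDBK2 G m ps) 0 z = Ham G m z"
proof -
  have "(\<Sum>(c, f)\<leftarrow>concat (map (\<lambda>(i, j). [(-1/2, \<lambda>z. Tk m i z + Tk m j z), (1/2, Hpair G m i j)]) ps).
      c * f z) = Vs G m ps z / 2"
    "(\<Sum>(c, f)\<leftarrow>concat (map (\<lambda>(i, j). [(1/2, Hpair G m i j), (-1/2, \<lambda>z. Tk m i z + Tk m j z)]) (rev ps)).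
      c * f z) = Vs G m ps z / 2"
    by (induction ps) (auto simp: Vs_def Hpair_def field_simps)
  then show ?thesis
    unfolding surr_0 KDBK2_def phi_s_def phi_s_dag_def map_append sum_list_append
    by (simp add: Ham_def Vc_def field_simps)
qed

lemma rev_KDBK2: "rev (KDBK2 G m ps) = KDBK2 G m ps"
  by (simp add: KDBK2_def phi_s_def phi_s_dag_def rev_concat rev_map o_def case_prod_unfold)

lemma surr_2_eq_bch3_jets:
  assumes reps: "\<forall>(c, f)\<in>set fs. has_kin_pot_rep f" and inj: "inj (fst z)"
  shows "surr fs 2 z = double_bracket.bch3 (jet_bracket (snd z)) (map (\<lambda>(c, f). (c, jet z f)) fs)"
proof -
  interpret double_bracket "jet_bracket (snd z)" by (rule double_bracket_jet_bracket)
  let ?ds = "map (\<lambda>(c, f). (c, jet z f)) fs"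
  have "surr fs 2 z = (\<Sum>w\<in>{w. length w = 3 \<and> set w \<subseteq> {..<length fs}}.
      logcoef w * prod_list (map (\<lambda>a. fst (fs ! a)) w) / 3 * nestf fs w z)"
    by (simp add: surr_def Let_def numeral_3_eq_3)
  also have "\<dots> = bch3 ?ds" unfolding bch3_def length_map
  proof (rule sum.cong[OF refl])
    fix w assume "w \<in> {w. length w = 3 \<and> set w \<subseteq> {..<length fs}}"
    then obtain a b c where w: "w = [a, b, c]" and lt: "a < length fs" "b < length fs" "c < length fs"
      by (auto simp: length_Suc_conv numeral_3_eq_3)
    have "has_kin_pot_rep (snd (fs ! d))" if "d < length fs" for d
      using reps that nth_mem by fastforce
    then have "nestf fs w z = jet_bracket (snd z) (jet z (snd (fs ! a))) (jet z (snd (fs ! b)))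
        (jet z (snd (fs ! c)))"
      unfolding w using lb_lb_eq_jet_bracket[OF _ _ _ inj] lt by simp
    then show "logcoef w * prod_list (map (\<lambda>a. fst (fs ! a)) w) / 3 * nestf fs w z =
        logcoef w * prod_list (map (\<lambda>a. fst (?ds ! a)) w) / 3 * word_bracket ?ds w"
      using w lt by (simp add: case_prod_unfold)
  qed
  finally show ?thesis .
qed

lemma jets_KDBK2:
  assumes inj: "inj (fst z)"
  shows "map (\<lambda>(c, f). (c, jet z f)) (KDBK2 G m ps) =
    [(1/6, jet z (Vc G m ps)), (1/2, jet z (Tkin m))]
    @ inner_block (\<lambda>p. jet z (\<lambda>z. Tk m (fst p) z + Tk m (snd p) z)) (\<lambda>p. jet z (Vp G m (fst p) (snd p)))
        (jet z (Vc G m ps)) ps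
    @ [(1/2, jet z (Tkin m)), (1/6, jet z (Vc G m ps))]"
proof -
  have "jet z (Hpair G m i j) = jet z (\<lambda>z. Tk m i z + Tk m j z) + jet z (Vp G m i j)" for i j
    using jet_add[OF has_kin_pot_rep_add[OF has_kin_pot_rep_Tk has_kin_pot_rep_Tk] has_kin_pot_rep_Vp inj]
    by (simp add: Hpair_def[abs_def])
  then show ?thesis
    by (simp add: KDBK2_def phi_s_def phi_s_dag_def inner_block_def map_concat case_prod_unfold o_def)
qed

lemma jet_bracket_pair_kin_Vp:
  fixes G :: real and m :: "'n::finite \<Rightarrow> real" and z :: "'n phase"
  assumes "i \<noteq> j" and inj: "inj (fst z)"
  defines "V \<equiv> jet z (Vp G m i j)" and "T\<^sub>i\<^sub>j \<equiv> jet z (\<lambda>z. Tk m i z + Tk m j z)"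
    and "T \<equiv> jet z (Tkin m)"
  shows "jet_bracket (snd z) x T\<^sub>i\<^sub>j V = jet_bracket (snd z) x T V"
    and "jet_bracket (snd z) T\<^sub>i\<^sub>j T\<^sub>i\<^sub>j V = jet_bracket (snd z) T T V"
proof -
  have supp: "pot_jet_supported {i, j} V"
    unfolding V_def by (rule jet_Vp_supported[OF inj])
  have agree: "(\<chi> l. kin_coeff m i l + kin_coeff m j l) $ l = (\<chi> l. 1 / (2 * m l)) $ l"
    if "l \<in> {i, j}" for l
    using that \<open>i \<noteq> j\<close> by (auto simp: kin_coeff_def)
  note jets = T\<^sub>i\<^sub>j_def T_def jet_pair_kin[OF inj] jet_Tkin[OF inj]
  show mid: "jet_bracket (snd z) x T\<^sub>i\<^sub>j V = jet_bracket (snd z) x T V" for x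
    unfolding jets by (rule jet_bracket_kinetic_mid[OF supp agree])
  show "jet_bracket (snd z) T\<^sub>i\<^sub>j T\<^sub>i\<^sub>j V = jet_bracket (snd z) T T V"
    unfolding mid unfolding jets by (rule jet_bracket_kinetic_left[OF supp agree])
qed

lemma poisson_poisson_eq_jet_bracket:
  assumes "has_kin_pot_rep A" "has_kin_pot_rep B" "inj (fst z)"
  shows "poisson (poisson A B) B z = jet_bracket (snd z) (jet z B) (jet z B) (jet z A)"
  using lb_lb_eq_jet_bracket[OF assms(2,1,2,3)] by (simp add: lb_def)

lemma surr_KDBK2_2:
  assumes pairs: "\<forall>(i, j)\<in>set ps. i \<noteq> j" and inj: "inj (fst z)"
  shows "surr (KDBK2 G m ps) 2 z = (1/48) * TVsVs3 G m ps z
    + (1/72) * poisson (poisson (Tkin m) (Vc G m ps)) (Vc G m ps) z"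
proof -
  interpret J: double_bracket_potentials "jet_bracket (snd z)" "\<lambda>d. fst d = 0"
    by (rule double_bracket_potentials_jet_bracket)
  let ?C = "jet z (Vc G m ps)" and ?T = "jet z (Tkin m)"
  let ?TT = "\<lambda>p. jet z (\<lambda>z. Tk m (fst p) z + Tk m (snd p) z)"
    and ?VV = "\<lambda>p. jet z (Vp G m (fst p) (snd p))"
  have pot_VV: "fst (?VV p) = 0" for p
    using jet_Vp_supported[OF inj] by (simp add: pot_jet_supported_def)
  have kin: "jet_bracket (snd z) x (?TT p) (?VV p) = jet_bracket (snd z) x ?T (?VV p)"
    and kin_kin: "jet_bracket (snd z) (?TT p) (?TT p) (?VV p) = jet_bracket (snd z) ?T ?T (?VV p)"
    if "p \<in> set ps" for p x
  proof -
    have "fst p \<noteq> snd p" using pairs that by auto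
    from jet_bracket_pair_kin_Vp[OF this inj]
    show "jet_bracket (snd z) x (?TT p) (?VV p) = jet_bracket (snd z) x ?T (?VV p)"
      and "jet_bracket (snd z) (?TT p) (?TT p) (?VV p) = jet_bracket (snd z) ?T ?T (?VV p)" .
  qed
  have pot_C: "fst ?C = 0"
    by (rule fst_jet_position_only[OF has_kin_pot_rep_Vc _ inj])
      (simp only: Vc_def Vpot_def Vs_def Vp_def fst_conv)
  have reps: "\<forall>(c, f)\<in>set (KDBK2 G m ps). has_kin_pot_rep f"
    by (auto simp: KDBK2_def phi_s_def phi_s_dag_def Hpair_def[abs_def] has_kin_pot_rep_Vc
        has_kin_pot_rep_Tkin intro!: has_kin_pot_rep_add has_kin_pot_rep_Tk has_kin_pot_rep_Vp)
  have "surr (KDBK2 G m ps) 2 z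
      = J.bch3 ([(1/6, ?C), (1/2, ?T)] @ inner_block ?TT ?VV ?C ps @ [(1/2, ?T), (1/6, ?C)])"
    unfolding surr_2_eq_bch3_jets[OF reps inj] jets_KDBK2[OF inj] ..
  also have "\<dots> = (jet_bracket (snd z) (\<Sum>p\<leftarrow>ps. ?VV p) (\<Sum>p\<leftarrow>ps. ?VV p) ?T
        - (\<Sum>p\<leftarrow>ps. jet_bracket (snd z) (?VV p) (?VV p) ?T)) / 48 + jet_bracket (snd z) ?C ?C ?T / 72"
    by (rule J.bch3_KDBK2_pattern[OF pot_VV pot_C kin kin_kin])
  also have "jet z (Vs G m ps) = (\<Sum>p\<leftarrow>ps. ?VV p)"
    unfolding Vs_def case_prod_unfold by (rule jet_sum_list) (auto intro: has_kin_pot_rep_Vp inj)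
  then have "(jet_bracket (snd z) (\<Sum>p\<leftarrow>ps. ?VV p) (\<Sum>p\<leftarrow>ps. ?VV p) ?T
        - (\<Sum>p\<leftarrow>ps. jet_bracket (snd z) (?VV p) (?VV p) ?T)) / 48 + jet_bracket (snd z) ?C ?C ?T / 72
      = (1/48) * TVsVs3 G m ps z + (1/72) * poisson (poisson (Tkin m) (Vc G m ps)) (Vc G m ps) z"
    by (simp add: TVsVs3_def poisson_poisson_eq_jet_bracket[OF _ _ inj] has_kin_pot_rep_Tkin
        has_kin_pot_rep_Vs has_kin_pot_rep_Vp has_kin_pot_rep_Vc case_prod_unfold)
  finally show ?thesis .
qed

theorem mainTheorem8:
  fixes G :: real and m :: "'n::finite \<Rightarrow> real"
    and S :: "'n set set" and ps :: "('n \<times> 'n) list"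
  assumes "G > 0" and "\<And>i. m i > 0"
    and "\<forall>(i,j)\<in>set ps. i \<noteq> j"
    and "distinct (map (\<lambda>(i,j). {i,j}) ps)"
    and "set (map (\<lambda>(i,j). {i,j}) ps) = S"
    and "inj (fst z)"
    and "k < 4"
  shows "surr (KDBK2 G m ps) k z - (if k = 0 then Ham G m z else 0)
       = (if k = 2 then (1/48) * TVsVs3 G m ps z
            + (1/72) * poisson (poisson (Tkin m) (Vc G m ps)) (Vc G m ps) z
          else 0)"
proof -
  consider "k = 0" | "k = 1 \<or> k = 3" | "k = 2" using \<open>k < 4\<close> by linarith
  then show ?thesis
  proof cases
    case 1
    then show ?thesis by (simp add: surr_KDBK2_0)
  next
    case 2
    then have "surr (KDBK2 G m ps) k z = 0" by (rule surr_palindrome_even_degree[OF rev_KDBK2])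
    with 2 show ?thesis by auto
  next
    case 3
    then show ?thesis using surr_KDBK2_2[OF assms(3,6)] by simp
  qed
qed
end
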